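(* For every $k\ge1$ there exists a clean universal $k$-URA $\mathcal A_k$ over $(\mathbb N;=)$ and the singleton alphabet $\Sigma=\{\sigma\}$ together with a configuration reachable in $\mathcal A_k$ that contains at least $k!$ distinct states with the same location. In particular $N_k\ge k!$.
   Context: Let $\Sigma$ be a finite alphabet; data words are finite sequences in $(\Sigma\times\mathbb N)^*$. Let $\mathbb N_\bot=\mathbb N\cup\{\bot\}$, $\bot$ equal only to itself. Register constraints over registers $\mathcal R$ are Boolean combinations of atoms $t_1=t_2$ with $t_i\in\{\#\}\cup\{r,\dot r:r\in\mathcal R\}$, interpreted on triples $(\mathbf u,d,\mathbf v)$ (current valuation, input datum, next valuation, valuations $\mathcal R\to\mathbb N_\bot$). A $k$-RA over $(\mathbb N;=)$ is $(\mathcal R,\mathcal L,\ell_{init},\mathcal L_{acc},E)$ with $|\mathcal R|=k$, finite locations, finite edges $(\ell,\sigma,\phi,\ell')$ whose constraints contain for each register $r$ a conjunct $\dot r=r$ or $\dot r=\#$. States are $\ell(\mathbf u)$; the initial state is $\ell_{init}$ with all registers $\bot$; $\ell(\mathbf u)\xrightarrow{\sigma,d}\ell'(\mathbf u')$ if some edge $(\ell,\sigma,\phi,\ell')$ has $(\mathbf u,d,\mathbf u')\models\phi$. A word is accepted from a state if some run on it from that state ends in a state with location in $\mathcal L_{acc}$; $L(\mathcal A)$: words accepted from the initial state; universal means $L(\mathcal A)=(\Sigma\times\mathbb N)^*$. A $k$-URA is a $k$-RA where each data word has at most one initialized accepting run. Clean: every reachable state $\ell(u_1,\dots,u_k)$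 accepts some word and no element of $\mathbb N$ occurs in two different components of $(u_1,\dots,u_k)$. A configuration is a set of states; $\mathrm{succ}(C,(\sigma,d))$ is the set of states reachable by one transition on $(\sigma,d)$ from a state in $C$, extended to words; $C$ is reachable if $C=\mathrm{succ}(\{\text{initial state}\},w)$ for some $w$. $N_k$ denotes the supremum, over all clean universal $k$-URA over $(\mathbb N;=)$ and all their reachable configurations $C$, of the maximal number of distinct states in $C$ sharing the same location. *)

theory Defs
  imports Main "HOL-Library.Extended_Nat"
begin

text \<open>Registers of a k-RA are 0,...,k-1; a valuation is a list of length k of
  values in N_bot, encoded as nat option (None = bot).\<close>

type_synonym valuation = "nat option list"

datatype rterm = Dat | Cur nat | Nxt nat
  \<comment> \<open>Dat = input datum #, Cur r = r, Nxt r = dotted r\<close>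

datatype constr = CTrue | CEq rterm rterm | CNot constr
  | CAnd constr constr | COr constr constr

fun tval :: "valuation \<Rightarrow> nat \<Rightarrow> valuation \<Rightarrow> rterm \<Rightarrow> nat option" where
  "tval u d v Dat = Some d"
| "tval u d v (Cur r) = u ! r"
| "tval u d v (Nxt r) = v ! r"

fun sat :: "valuation \<Rightarrow> nat \<Rightarrow> valuation \<Rightarrow> constr \<Rightarrow> bool" where
  "sat u d v CTrue = True"
| "sat u d v (CEq t1 t2) = (tval u d v t1 = tval u d v t2)"
| "sat u d v (CNot p) = (\<not> sat u d v p)"
| "sat u d v (CAnd p q) = (sat u d v p \<and> sat u d v q)"
| "sat u d v (COr p q) = (sat u d v p \<or> sat u d v q)"

fun tregs :: "rterm \<Rightarrow> nat set" where
  "tregs Dat = {}" | "tregs (Cur r) = {r}" | "tregs (Nxt r) = {r}"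

fun cregs :: "constr \<Rightarrow> nat set" where
  "cregs CTrue = {}"
| "cregs (CEq t1 t2) = tregs t1 \<union> tregs t2"
| "cregs (CNot p) = cregs p"
| "cregs (CAnd p q) = cregs p \<union> cregs q"
| "cregs (COr p q) = cregs p \<union> cregs q"

fun conjuncts :: "constr \<Rightarrow> constr set" where
  "conjuncts (CAnd p q) = conjuncts p \<union> conjuncts q"
| "conjuncts p = {p}"

record ('l, 's) ra =
  nregs :: nat
  locs :: "'l set"
  alph :: "'s set"
  linit :: 'l
  lacc :: "'l set"
  edges :: "('l \<times> 's \<times> constr \<times> 'l) set"

definition wf_ra :: "('l, 's) ra \<Rightarrow> bool" where
  "wf_ra A \<longleftrightarrow> finite (locs A) \<and> finite (alph A) \<and> linit A \<in> locs A \<and> lacc A \<subseteq> locs A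
    \<and> finite (edges A)
    \<and> (\<forall>(l, \<sigma>, \<phi>, l') \<in> edges A. l \<in> locs A \<and> \<sigma> \<in> alph A \<and> l' \<in> locs A
         \<and> cregs \<phi> \<subseteq> {..<nregs A}
         \<and> (\<forall>r < nregs A. CEq (Nxt r) (Cur r) \<in> conjuncts \<phi> \<or> CEq (Nxt r) Dat \<in> conjuncts \<phi>))"

type_synonym 'l state = "'l \<times> valuation"

definition init_state :: "('l, 's) ra \<Rightarrow> 'l state" where
  "init_state A = (linit A, replicate (nregs A) None)"

definition is_state :: "('l, 's) ra \<Rightarrow> 'l state \<Rightarrow> bool" where
  "is_state A q \<longleftrightarrow> fst q \<in> locs A \<and> length (snd q) = nregs A"

definition step :: "('l, 's) ra \<Rightarrow> 'l state \<Rightarrow> 's \<times> nat \<Rightarrow> 'l state \<Rightarrow> bool" where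
  "step A q a q' \<longleftrightarrow> is_state A q \<and> is_state A q' \<and>
     (\<exists>\<phi>. (fst q, fst a, \<phi>, fst q') \<in> edges A \<and> sat (snd q) (snd a) (snd q') \<phi>)"

definition words :: "('l, 's) ra \<Rightarrow> ('s \<times> nat) list set" where
  "words A = {w. \<forall>a \<in> set w. fst a \<in> alph A}"

definition is_run :: "('l, 's) ra \<Rightarrow> 'l state \<Rightarrow> ('s \<times> nat) list \<Rightarrow> 'l state list \<Rightarrow> bool" where
  "is_run A q w qs \<longleftrightarrow> length qs = Suc (length w) \<and> qs ! 0 = q
     \<and> (\<forall>i < length w. step A (qs ! i) (w ! i) (qs ! Suc i))"

definition accepting_run :: "('l, 's) ra \<Rightarrow> 'l state \<Rightarrow> ('s \<times> nat) list \<Rightarrow> 'l state list \<Rightarrow> bool" where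
  "accepting_run A q w qs \<longleftrightarrow> is_run A q w qs \<and> fst (last qs) \<in> lacc A"

definition accepts_from :: "('l, 's) ra \<Rightarrow> 'l state \<Rightarrow> ('s \<times> nat) list \<Rightarrow> bool" where
  "accepts_from A q w \<longleftrightarrow> (\<exists>qs. accepting_run A q w qs)"

definition lang :: "('l, 's) ra \<Rightarrow> ('s \<times> nat) list set" where
  "lang A = {w \<in> words A. accepts_from A (init_state A) w}"

definition universal :: "('l, 's) ra \<Rightarrow> bool" where
  "universal A \<longleftrightarrow> lang A = words A"

definition k_RA :: "nat \<Rightarrow> ('l, 's) ra \<Rightarrow> bool" where
  "k_RA k A \<longleftrightarrow> wf_ra A \<and> nregs A = k"

definition unambiguous :: "('l, 's) ra \<Rightarrow> bool" where
  "unambiguous A \<longleftrightarrow> (\<forall>w \<in> words A. \<forall>qs qs'.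
      accepting_run A (init_state A) w qs \<longrightarrow> accepting_run A (init_state A) w qs' \<longrightarrow> qs = qs')"

definition k_URA :: "nat \<Rightarrow> ('l, 's) ra \<Rightarrow> bool" where
  "k_URA k A \<longleftrightarrow> k_RA k A \<and> unambiguous A"

definition reachable_state :: "('l, 's) ra \<Rightarrow> 'l state \<Rightarrow> bool" where
  "reachable_state A q \<longleftrightarrow> (\<exists>w \<in> words A. \<exists>qs. is_run A (init_state A) w qs \<and> last qs = q)"

definition clean :: "('l, 's) ra \<Rightarrow> bool" where
  "clean A \<longleftrightarrow> (\<forall>q. reachable_state A q \<longrightarrow>
      (\<exists>w \<in> words A. accepts_from A q w)
      \<and> (\<forall>i < length (snd q). \<forall>j < length (snd q). \<forall>n::nat.
            i \<noteq> j \<longrightarrow> snd q ! i = Some n \<longrightarrow> snd q ! j \<noteq> Some n))"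

definition succ :: "('l, 's) ra \<Rightarrow> 'l state set \<Rightarrow> 's \<times> nat \<Rightarrow> 'l state set" where
  "succ A C a = {q'. \<exists>q \<in> C. step A q a q'}"

fun succ_word :: "('l, 's) ra \<Rightarrow> 'l state set \<Rightarrow> ('s \<times> nat) list \<Rightarrow> 'l state set" where
  "succ_word A C [] = C"
| "succ_word A C (a # w) = succ_word A (succ A C a) w"

definition reachable_config :: "('l, 's) ra \<Rightarrow> 'l state set \<Rightarrow> bool" where
  "reachable_config A C \<longleftrightarrow> (\<exists>w \<in> words A. C = succ_word A {init_state A} w)"

definition ecard :: "'a set \<Rightarrow> enat" where
  "ecard S = (if finite S then enat (card S) else \<infinity>)"

text \<open>N_k: supremum over clean universal k-URA (locations and letters w.l.o.g. taken
  as finite sets of naturals) and reachable configurations C of the maximal number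
  of states in C with the same location.\<close>
definition N :: "nat \<Rightarrow> enat" where
  "N k = (SUP x \<in> {(A, C, l). k_URA k (A :: (nat, nat) ra) \<and> clean A \<and> universal A
                \<and> reachable_config A C}.
            (case x of (A, C, l) \<Rightarrow> ecard {q \<in> C. fst q = l}))"

end

theory Submission
  imports Defs "HOL-Library.Nat_Bijection" "HOL-Combinatorics.Multiset_Permutations"
begin

text \<open>
  The automaton for k registers reads data over a single letter. A deterministic branch
  stores the first k data in registers 0, ..., k-1 (moving to an accepting sink on a
  repeated datum) and then accepts unless the rest of the word is a permutation of the
  stored data. A guessing branch stores each of the first k data, which must be fresh, in a
  register of its choice and accepts exactly when the next k data are the register contents
  in the order 0, ..., k-1. The two branches accept complementary sets of words, and a word
  accepted by the guessing branch determines every guess, because the i-th datum must sit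
  in the register whose index is its position in the second block; so the automaton is
  universal and unambiguous. After reading 0, 1, ..., k-1, every injective assignment of
  these data to the registers is a reachable valuation of the guessing branch, giving k!
  states at the same location.
\<close>

section \<open>Runs and configurations\<close>

lemma accepting_run_Nil:
  "accepting_run A q [] qs \<longleftrightarrow> qs = [q] \<and> fst q \<in> lacc A"
proof -
  have "accepting_run A q [] qs \<Longrightarrow> qs = [q]"
    by (cases qs) (auto simp: accepting_run_def is_run_def)
  then show ?thesis by (cases qs) (auto simp: accepting_run_def is_run_def)
qed

lemma accepts_from_Nil: "accepts_from A q [] \<longleftrightarrow> fst q \<in> lacc A"
  by (auto simp: accepts_from_def accepting_run_Nil)

lemma is_run_Cons:
  "is_run A q (a#w) qs \<longleftrightarrow> (\<exists>q' qs'. qs = q#qs' \<and> step A q a q' \<and> is_run A q' w qs')"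
proof
  assume r: "is_run A q (a#w) qs"
  then obtain qs' where qs: "qs = q # qs'" by (cases qs) (auto simp: is_run_def)
  with r have "step A q a (qs' ! 0) \<and> is_run A (qs' ! 0) w qs'"
    by (simp add: is_run_def All_less_Suc2)
  with qs show "\<exists>q' qs'. qs = q#qs' \<and> step A q a q' \<and> is_run A q' w qs'" by blast
next
  assume "\<exists>q' qs'. qs = q#qs' \<and> step A q a q' \<and> is_run A q' w qs'"
  then obtain q' qs' where "qs = q # qs'" "step A q a q'" "is_run A q' w qs'" by blast
  then show "is_run A q (a#w) qs" by (simp add: is_run_def All_less_Suc2)
qed

lemma accepting_run_Cons:
  "accepting_run A q (a#w) qs \<longleftrightarrow>
     (\<exists>q' qs'. qs = q#qs' \<and> step A q a q' \<and> accepting_run A q' w qs')"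
proof
  assume "accepting_run A q (a#w) qs"
  then obtain q' qs' where qs: "qs = q # qs'" and "step A q a q'" "is_run A q' w qs'"
    and "fst (last qs) \<in> lacc A"
    unfolding accepting_run_def is_run_Cons by blast
  moreover have "last qs = last qs'" using qs \<open>is_run A q' w qs'\<close> by (auto simp: is_run_def)
  ultimately show "\<exists>q' qs'. qs = q#qs' \<and> step A q a q' \<and> accepting_run A q' w qs'"
    unfolding accepting_run_def by metis
next
  assume "\<exists>q' qs'. qs = q#qs' \<and> step A q a q' \<and> accepting_run A q' w qs'"
  then obtain q' qs' where "qs = q # qs'" "step A q a q'" "accepting_run A q' w qs'" by blast
  moreover have "qs' \<noteq> []"
    using \<open>accepting_run A q' w qs'\<close> by (auto simp: accepting_run_def is_run_def)
  ultimately show "accepting_run A q (a#w) qs"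
    unfolding accepting_run_def is_run_Cons by (auto simp del: split_paired_Ex)
qed

lemma accepts_from_Cons:
  "accepts_from A q (a#w) \<longleftrightarrow> (\<exists>q'. step A q a q' \<and> accepts_from A q' w)"
  by (auto simp: accepts_from_def accepting_run_Cons)

lemma reachable_state_induct:
  assumes init: "I (init_state A)"
    and pres: "\<And>q a q'. I q \<Longrightarrow> fst a \<in> alph A \<Longrightarrow> step A q a q' \<Longrightarrow> I q'"
    and "reachable_state A q"
  shows "I q"
proof -
  obtain w qs where w: "w \<in> words A" and run: "is_run A (init_state A) w qs" and q: "last qs = q"
    using assms(3) by (auto simp: reachable_state_def)
  have len: "length qs = Suc (length w)" using run by (simp add: is_run_def)
  have "I (qs ! i)" if "i \<le> length w" for i
    using that
  proof (induction i)
    case 0 then show ?case using init run by (simp add: is_run_def)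
  next
    case (Suc i)
    have "step A (qs ! i) (w ! i) (qs ! Suc i)" using run Suc.prems by (simp add: is_run_def)
    moreover have "fst (w ! i) \<in> alph A" using w Suc.prems by (simp add: words_def)
    ultimately show ?case using pres Suc by simp
  qed
  moreover have "last qs = qs ! length w" using len by (subst last_conv_nth) auto
  ultimately show ?thesis using q by simp
qed

lemma unambiguousI:
  assumes init: "I (init_state A)"
    and pres: "\<And>q a q'. I q \<Longrightarrow> fst a \<in> alph A \<Longrightarrow> step A q a q' \<Longrightarrow> I q'"
    and det: "\<And>q a q1 q2 w. I q \<Longrightarrow> fst a \<in> alph A \<Longrightarrow> step A q a q1 \<Longrightarrow> step A q a q2
              \<Longrightarrow> accepts_from A q1 w \<Longrightarrow> accepts_from A q2 w \<Longrightarrow> q1 = q2"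
  shows "unambiguous A"
proof -
  have "qs = qs'" if "I q" "w \<in> words A" "accepting_run A q w qs" "accepting_run A q w qs'"
    for q w qs qs'
    using that
  proof (induction w arbitrary: q qs qs')
    case Nil then show ?case by (auto simp: accepting_run_Nil)
  next
    case (Cons a w)
    from Cons.prems(3) obtain q1 qs1 where 1: "qs = q # qs1" "step A q a q1" "accepting_run A q1 w qs1"
      by (auto simp: accepting_run_Cons)
    from Cons.prems(4) obtain q2 qs2 where 2: "qs' = q # qs2" "step A q a q2" "accepting_run A q2 w qs2"
      by (auto simp: accepting_run_Cons)
    have a: "fst a \<in> alph A" and w: "w \<in> words A" using Cons.prems(2) by (auto simp: words_def)
    have "q1 = q2" using det[OF Cons.prems(1) a 1(2) 2(2)] 1(3) 2(3) by (auto simp: accepts_from_def)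
    moreover have "I q1" using pres[OF Cons.prems(1) a 1(2)] .
    ultimately show ?case using Cons.IH[OF _ w 1(3)] 1(1) 2(1,3) by auto
  qed
  with init show ?thesis unfolding unambiguous_def by blast
qed

lemma succ_word_snoc: "succ_word A C (w @ [a]) = succ A (succ_word A C w) a"
  by (induction w arbitrary: C) auto

lemma ecard_le_N:
  fixes A :: "(nat, nat) ra"
  assumes "k_URA k A" "clean A" "universal A" "reachable_config A C"
  shows "ecard {q \<in> C. fst q = l} \<le> N k"
proof -
  have "(A, C, l) \<in> {(A, C, l). k_URA k A \<and> clean A \<and> universal A \<and> reachable_config A C}"
    using assms by simp
  then show ?thesis unfolding N_def by (rule SUP_upper2) simp
qed

fun conj_list :: "constr list \<Rightarrow> constr" where
  "conj_list [] = CTrue"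
| "conj_list (c # cs) = CAnd c (conj_list cs)"

lemma sat_conj_list_map:
  "sat u d v (conj_list (map f xs)) \<longleftrightarrow> (\<forall>x\<in>set xs. sat u d v (f x))"
  by (induction xs) auto

lemma cregs_conj_list: "cregs (conj_list cs) = (\<Union>c\<in>set cs. cregs c)"
  by (induction cs) auto

lemma conjuncts_conj_list:
  "(\<forall>c\<in>set cs. conjuncts c = {c}) \<Longrightarrow> set cs \<subseteq> conjuncts (conj_list cs)"
  by (induction cs) auto

definition stored :: "valuation \<Rightarrow> nat set" where
  "stored u = {d. Some d \<in> set u}"

definition fresh_datum :: "nat \<Rightarrow> constr" where
  "fresh_datum k = conj_list (map (\<lambda>s. CNot (CEq Dat (Cur s))) [0..<k])"

definition load :: "nat \<Rightarrow> nat \<Rightarrow> constr" where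
  "load k r = conj_list (map (\<lambda>s. if s = r then CEq (Nxt s) Dat else CEq (Nxt s) (Cur s)) [0..<k])"

text \<open>Register k does not exist, so loading it leaves all registers unchanged.\<close>
abbreviation keep :: "nat \<Rightarrow> constr" where
  "keep k \<equiv> load k k"

lemma sat_fresh_datum:
  "length u = k \<Longrightarrow> sat u d v (fresh_datum k) \<longleftrightarrow> d \<notin> stored u"
  unfolding fresh_datum_def sat_conj_list_map by (auto simp: stored_def in_set_conv_nth Ball_def)

lemma sat_load:
  assumes "length u = k" "length v = k"
  shows "sat u d v (load k r) \<longleftrightarrow> v = u[r := Some d]"
proof -
  have "sat u d v (load k r) \<longleftrightarrow> (\<forall>s<k. v ! s = (if s = r then Some d else u ! s))"
    unfolding load_def sat_conj_list_map by (simp add: Ball_def if_distrib)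
  also have "\<dots> \<longleftrightarrow> (\<forall>s<k. v ! s = u[r := Some d] ! s)"
    using assms(1) by (metis nth_list_update_eq nth_list_update_neq)
  also have "\<dots> \<longleftrightarrow> v = u[r := Some d]"
    using assms by (simp add: list_eq_iff_nth_eq)
  finally show ?thesis .
qed

lemma cregs_fresh_datum: "cregs (fresh_datum k) \<subseteq> {..<k}"
  by (auto simp: fresh_datum_def cregs_conj_list)

lemma cregs_load: "cregs (load k r) \<subseteq> {..<k}"
  by (auto simp: load_def cregs_conj_list split: if_splits)

lemma conjuncts_load:
  "s < k \<Longrightarrow> CEq (Nxt s) (Cur s) \<in> conjuncts (load k r) \<or> CEq (Nxt s) Dat \<in> conjuncts (load k r)"
proof -
  let ?cs = "map (\<lambda>s. if s = r then CEq (Nxt s) Dat else CEq (Nxt s) (Cur s)) [0..<k]"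
  have "set ?cs \<subseteq> conjuncts (conj_list ?cs)" by (rule conjuncts_conj_list) auto
  moreover assume "s < k"
  ultimately show ?thesis by (cases "s = r") (auto simp: load_def)
qed

section \<open>The automaton\<close>

text \<open>Locations are natural numbers: the residue modulo 5 gives the kind of a location, and
  the register sets indexing guessing and checking locations are coded by
  set_encode.\<close>

definition store_loc :: "nat \<Rightarrow> nat" where "store_loc i = 5 * i"
definition guess_loc :: "nat set \<Rightarrow> nat" where "guess_loc S = 5 * set_encode S + 1"
definition verify_loc :: "nat \<Rightarrow> nat" where "verify_loc j = 5 * j + 2"
definition check_loc :: "nat set \<Rightarrow> nat" where "check_loc S = 5 * set_encode S + 3"
definition sink_loc :: nat where "sink_loc = 4"

lemma store_loc_eq_iff [simp]: "store_loc i = store_loc j \<longleftrightarrow> i = j"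
  by (simp add: store_loc_def)

lemma verify_loc_eq_iff [simp]: "verify_loc i = verify_loc j \<longleftrightarrow> i = j"
  by (simp add: verify_loc_def)

lemma guess_loc_eq_iff [simp]: "finite S \<Longrightarrow> finite T \<Longrightarrow> guess_loc S = guess_loc T \<longleftrightarrow> S = T"
  by (simp add: guess_loc_def set_encode_eq)

lemma check_loc_eq_iff [simp]: "finite S \<Longrightarrow> finite T \<Longrightarrow> check_loc S = check_loc T \<longleftrightarrow> S = T"
  by (simp add: check_loc_def set_encode_eq)

lemma locs_distinct [simp]:
  "store_loc i \<noteq> guess_loc S" "guess_loc S \<noteq> store_loc i"
  "store_loc i \<noteq> verify_loc j" "verify_loc j \<noteq> store_loc i"
  "store_loc i \<noteq> check_loc S" "check_loc S \<noteq> store_loc i"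
  "store_loc i \<noteq> sink_loc" "sink_loc \<noteq> store_loc i"
  "guess_loc S \<noteq> verify_loc j" "verify_loc j \<noteq> guess_loc S"
  "guess_loc S \<noteq> check_loc T" "check_loc T \<noteq> guess_loc S"
  "guess_loc S \<noteq> sink_loc" "sink_loc \<noteq> guess_loc S"
  "verify_loc j \<noteq> check_loc S" "check_loc S \<noteq> verify_loc j"
  "verify_loc j \<noteq> sink_loc" "sink_loc \<noteq> verify_loc j"
  "check_loc S \<noteq> sink_loc" "sink_loc \<noteq> check_loc S"
  by (simp_all add: store_loc_def guess_loc_def verify_loc_def check_loc_def sink_loc_def, presburger+)

lemma finite_subset_lessThan: "S \<subseteq> {..<k::nat} \<Longrightarrow> finite S"
  using finite_subset by blast

definition store_phase :: "nat \<Rightarrow> nat \<Rightarrow> nat" where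
  "store_phase k i = (if i = k then check_loc {} else store_loc i)"

text \<open>The guessing branch leaves from the initial location, and verification starts in the
  guessing location where all registers are filled.\<close>
definition guess_from :: "nat \<Rightarrow> nat set \<Rightarrow> nat" where
  "guess_from k S = (if S = {} then store_loc 0 else guess_loc S)"

definition verify_from :: "nat \<Rightarrow> nat \<Rightarrow> nat" where
  "verify_from k j = (if j = 0 then guess_loc {..<k} else verify_loc j)"

lemma guess_from_eqs [simp]:
  "guess_from k S = store_loc i \<longleftrightarrow> S = {} \<and> i = 0"
  "store_loc i = guess_from k S \<longleftrightarrow> S = {} \<and> i = 0"
  "guess_from k S \<noteq> verify_loc j" "verify_loc j \<noteq> guess_from k S"
  "guess_from k S \<noteq> check_loc T" "check_loc T \<noteq> guess_from k S"
  "guess_from k S \<noteq> sink_loc" "sink_loc \<noteq> guess_from k S"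
  "finite S \<Longrightarrow> finite T \<Longrightarrow> guess_from k S = guess_loc T \<longleftrightarrow> S \<noteq> {} \<and> S = T"
  "finite S \<Longrightarrow> finite T \<Longrightarrow> guess_loc T = guess_from k S \<longleftrightarrow> S \<noteq> {} \<and> S = T"
  by (auto simp: guess_from_def)

lemma verify_from_eqs [simp]:
  "verify_from k j \<noteq> store_loc i" "store_loc i \<noteq> verify_from k j"
  "verify_from k j \<noteq> check_loc T" "check_loc T \<noteq> verify_from k j"
  "verify_from k j \<noteq> sink_loc" "sink_loc \<noteq> verify_from k j"
  "verify_from k j = verify_loc j' \<longleftrightarrow> j \<noteq> 0 \<and> j = j'"
  "verify_loc j' = verify_from k j \<longleftrightarrow> j \<noteq> 0 \<and> j = j'"
  "finite T \<Longrightarrow> verify_from k j = guess_loc T \<longleftrightarrow> j = 0 \<and> T = {..<k}"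
  "finite T \<Longrightarrow> guess_loc T = verify_from k j \<longleftrightarrow> j = 0 \<and> T = {..<k}"
  by (auto simp: verify_from_def)

type_synonym perm_edge = "nat \<times> nat \<times> constr \<times> nat"

definition store_edges :: "nat \<Rightarrow> perm_edge set" where
  "store_edges k = (\<lambda>i. (store_loc i, 0, CAnd (fresh_datum k) (load k i), store_phase k (Suc i))) ` {..<k}"

definition store_abort_edges :: "nat \<Rightarrow> perm_edge set" where
  "store_abort_edges k = (\<lambda>i. (store_loc i, 0, CAnd (CNot (fresh_datum k)) (keep k), sink_loc)) ` {..<k}"

definition guess_edges :: "nat \<Rightarrow> perm_edge set" where
  "guess_edges k =
    (\<lambda>(S, r). (guess_from k S, 0, CAnd (fresh_datum k) (load k r), guess_loc (insert r S)))
      ` {(S, r). S \<subseteq> {..<k} \<and> r < k \<and> r \<notin> S}"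

definition verify_edges :: "nat \<Rightarrow> perm_edge set" where
  "verify_edges k = (\<lambda>j. (verify_from k j, 0, CAnd (CEq Dat (Cur j)) (keep k), verify_loc (Suc j))) ` {..<k}"

definition check_edges :: "nat \<Rightarrow> perm_edge set" where
  "check_edges k =
    (\<lambda>(S, r). (check_loc S, 0, CAnd (CEq Dat (Cur r)) (keep k), check_loc (insert r S)))
      ` {(S, r). S \<subseteq> {..<k} \<and> r < k \<and> r \<notin> S}"

definition check_repeat_edges :: "nat \<Rightarrow> perm_edge set" where
  "check_repeat_edges k =
    (\<lambda>(S, r). (check_loc S, 0, CAnd (CEq Dat (Cur r)) (keep k), sink_loc))
      ` {(S, r). S \<subseteq> {..<k} \<and> S \<noteq> {..<k} \<and> r \<in> S}"

definition check_fresh_edges :: "nat \<Rightarrow> perm_edge set" where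
  "check_fresh_edges k =
    (\<lambda>S. (check_loc S, 0, CAnd (fresh_datum k) (keep k), sink_loc)) ` {S. S \<subseteq> {..<k} \<and> S \<noteq> {..<k}}"

definition sink_edges :: "nat \<Rightarrow> perm_edge set" where
  "sink_edges k = {(check_loc {..<k}, 0, keep k, sink_loc), (sink_loc, 0, keep k, sink_loc)}"

definition perm_edges :: "nat \<Rightarrow> perm_edge set" where
  "perm_edges k = store_edges k \<union> store_abort_edges k \<union> guess_edges k \<union> verify_edges k
    \<union> check_edges k \<union> check_repeat_edges k \<union> check_fresh_edges k \<union> sink_edges k"

lemmas perm_edges_split = perm_edges_def Un_iff

lemma store_edges_mem:
  "(l, a, \<phi>, l') \<in> store_edges k \<longleftrightarrow> a = 0 \<and>
     (\<exists>i<k. l = store_loc i \<and> \<phi> = CAnd (fresh_datum k) (load k i) \<and> l' = store_phase k (Suc i))"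
  by (auto simp: store_edges_def)

lemma store_abort_edges_mem:
  "(l, a, \<phi>, l') \<in> store_abort_edges k \<longleftrightarrow> a = 0 \<and>
     (\<exists>i<k. l = store_loc i \<and> \<phi> = CAnd (CNot (fresh_datum k)) (keep k) \<and> l' = sink_loc)"
  by (auto simp: store_abort_edges_def)

lemma guess_edges_mem:
  "(l, a, \<phi>, l') \<in> guess_edges k \<longleftrightarrow> a = 0 \<and> (\<exists>S r. S \<subseteq> {..<k} \<and> r < k \<and> r \<notin> S \<and>
     l = guess_from k S \<and> \<phi> = CAnd (fresh_datum k) (load k r) \<and> l' = guess_loc (insert r S))"
  by (auto simp: guess_edges_def image_iff)

lemma verify_edges_mem:
  "(l, a, \<phi>, l') \<in> verify_edges k \<longleftrightarrow> a = 0 \<and>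
     (\<exists>j<k. l = verify_from k j \<and> \<phi> = CAnd (CEq Dat (Cur j)) (keep k) \<and> l' = verify_loc (Suc j))"
  by (auto simp: verify_edges_def)

lemma check_edges_mem:
  "(l, a, \<phi>, l') \<in> check_edges k \<longleftrightarrow> a = 0 \<and> (\<exists>S r. S \<subseteq> {..<k} \<and> r < k \<and> r \<notin> S \<and>
     l = check_loc S \<and> \<phi> = CAnd (CEq Dat (Cur r)) (keep k) \<and> l' = check_loc (insert r S))"
  by (auto simp: check_edges_def image_iff)

lemma check_repeat_edges_mem:
  "(l, a, \<phi>, l') \<in> check_repeat_edges k \<longleftrightarrow> a = 0 \<and> (\<exists>S r. S \<subseteq> {..<k} \<and> S \<noteq> {..<k} \<and> r \<in> S \<and>
     l = check_loc S \<and> \<phi> = CAnd (CEq Dat (Cur r)) (keep k) \<and> l' = sink_loc)"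
  by (auto simp: check_repeat_edges_def image_iff)

lemma check_fresh_edges_mem:
  "(l, a, \<phi>, l') \<in> check_fresh_edges k \<longleftrightarrow> a = 0 \<and> (\<exists>S. S \<subseteq> {..<k} \<and> S \<noteq> {..<k} \<and>
     l = check_loc S \<and> \<phi> = CAnd (fresh_datum k) (keep k) \<and> l' = sink_loc)"
  by (auto simp: check_fresh_edges_def image_iff)

lemma sink_edges_mem:
  "(l, a, \<phi>, l') \<in> sink_edges k \<longleftrightarrow>
     a = 0 \<and> \<phi> = keep k \<and> l' = sink_loc \<and> (l = check_loc {..<k} \<or> l = sink_loc)"
  by (auto simp: sink_edges_def)

lemmas edge_families_mem = store_edges_mem store_abort_edges_mem guess_edges_mem
  verify_edges_mem check_edges_mem check_repeat_edges_mem check_fresh_edges_mem sink_edges_mem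

definition perm_locs :: "nat \<Rightarrow> nat set" where
  "perm_locs k = store_loc ` {..<k} \<union> guess_loc ` (Pow {..<k} - {{}}) \<union> verify_loc ` {1..k}
    \<union> check_loc ` Pow {..<k} \<union> {sink_loc}"

definition perm_acc :: "nat \<Rightarrow> nat set" where
  "perm_acc k = store_loc ` {..<k} \<union> {verify_loc k} \<union> check_loc ` (Pow {..<k} - {{..<k}})
    \<union> {sink_loc}"

definition perm_ra :: "nat \<Rightarrow> (nat, nat) ra" where
  "perm_ra k = \<lparr>nregs = k, locs = perm_locs k, alph = {0}, linit = store_loc 0,
    lacc = perm_acc k, edges = perm_edges k\<rparr>"

lemma perm_ra_simps [simp]:
  "nregs (perm_ra k) = k" "locs (perm_ra k) = perm_locs k" "alph (perm_ra k) = {0}"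
  "linit (perm_ra k) = store_loc 0" "lacc (perm_ra k) = perm_acc k" "edges (perm_ra k) = perm_edges k"
  by (simp_all add: perm_ra_def)

lemma edge_from_store_iff:
  "(store_loc i, a, \<phi>, l') \<in> perm_edges k \<longleftrightarrow> i < k \<and> a = 0 \<and>
     ((\<phi> = CAnd (fresh_datum k) (load k i) \<and> l' = store_phase k (Suc i))
    \<or> (\<phi> = CAnd (CNot (fresh_datum k)) (keep k) \<and> l' = sink_loc)
    \<or> (i = 0 \<and> (\<exists>r<k. \<phi> = CAnd (fresh_datum k) (load k r) \<and> l' = guess_loc {r})))"
    (is "?edge \<longleftrightarrow> ?cases")
proof
  show "?edge \<Longrightarrow> ?cases" unfolding perm_edges_split by (elim disjE) (auto simp: edge_families_mem)
  show "?cases \<Longrightarrow> ?edge"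
    by (elim conjE disjE exE)
      (auto simp: perm_edges_def store_edges_mem store_abort_edges_mem guess_edges_mem)
qed

lemma edge_from_guess_iff:
  assumes "S \<subseteq> {..<k}" "S \<noteq> {}"
  shows "(guess_loc S, a, \<phi>, l') \<in> perm_edges k \<longleftrightarrow> a = 0 \<and>
     ((\<exists>r<k. r \<notin> S \<and> \<phi> = CAnd (fresh_datum k) (load k r) \<and> l' = guess_loc (insert r S))
    \<or> (S = {..<k} \<and> \<phi> = CAnd (CEq Dat (Cur 0)) (keep k) \<and> l' = verify_loc 1))"
    (is "?edge \<longleftrightarrow> ?cases")
proof
  have fin: "finite S" using assms(1) by (rule finite_subset_lessThan)
  have src: "guess_loc S = guess_from k T \<longleftrightarrow> T = S" if "T \<subseteq> {..<k}" for T
    using fin assms(2) that by (auto simp: finite_subset_lessThan)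
  show "?edge \<Longrightarrow> ?cases" unfolding perm_edges_split using fin src by (elim disjE) (auto simp: edge_families_mem)
  assume ?cases
  then show ?edge
  proof (elim conjE disjE exE)
    fix r assume "a = 0" "r < k" "r \<notin> S" "\<phi> = CAnd (fresh_datum k) (load k r)"
      "l' = guess_loc (insert r S)"
    then have "(guess_from k S, a, \<phi>, l') \<in> guess_edges k"
      using assms(1) unfolding guess_edges_mem by blast
    then show ?edge using assms(2) by (simp add: perm_edges_def guess_from_def)
  next
    assume "a = 0" "S = {..<k}" "\<phi> = CAnd (CEq Dat (Cur 0)) (keep k)" "l' = verify_loc 1"
    moreover have "0 < k" using assms(2) \<open>S = {..<k}\<close> by auto
    ultimately have "(verify_from k 0, a, \<phi>, l') \<in> verify_edges k"
      unfolding verify_edges_mem by auto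
    then show ?edge using \<open>S = {..<k}\<close> by (simp add: perm_edges_def verify_from_def)
  qed
qed

lemma edge_from_verify_iff:
  assumes "j \<ge> 1"
  shows "(verify_loc j, a, \<phi>, l') \<in> perm_edges k \<longleftrightarrow>
    a = 0 \<and> j < k \<and> \<phi> = CAnd (CEq Dat (Cur j)) (keep k) \<and> l' = verify_loc (Suc j)"
    (is "?edge \<longleftrightarrow> ?cases")
proof
  show "?edge \<Longrightarrow> ?cases" unfolding perm_edges_split using assms by (elim disjE) (auto simp: edge_families_mem)
  have "verify_from k j = verify_loc j" using assms by (simp add: verify_from_def)
  then show "?cases \<Longrightarrow> ?edge" unfolding perm_edges_split by (force simp: edge_families_mem)
qed

lemma edge_from_check_iff:
  assumes "S \<subseteq> {..<k}"
  shows "(check_loc S, a, \<phi>, l') \<in> perm_edges k \<longleftrightarrow> a = 0 \<and>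
     ((\<exists>r<k. r \<notin> S \<and> \<phi> = CAnd (CEq Dat (Cur r)) (keep k) \<and> l' = check_loc (insert r S))
    \<or> (S \<noteq> {..<k} \<and> (\<exists>r\<in>S. \<phi> = CAnd (CEq Dat (Cur r)) (keep k) \<and> l' = sink_loc))
    \<or> (S \<noteq> {..<k} \<and> \<phi> = CAnd (fresh_datum k) (keep k) \<and> l' = sink_loc)
    \<or> (S = {..<k} \<and> \<phi> = keep k \<and> l' = sink_loc))"
    (is "?edge \<longleftrightarrow> ?cases")
proof
  have fin: "finite S" using assms by (rule finite_subset_lessThan)
  have src: "\<And>T. T \<subseteq> {..<k} \<Longrightarrow> check_loc S = check_loc T \<longleftrightarrow> T = S"
    using fin by (auto simp: finite_subset_lessThan)
  have full: "check_loc S = check_loc {..<k} \<longleftrightarrow> S = {..<k}" using fin by auto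
  assume ?edge
  then show ?cases
    unfolding perm_edges_split using src full
    by (elim disjE) (auto simp: store_edges_mem store_abort_edges_mem guess_edges_mem verify_edges_mem check_edges_mem check_repeat_edges_mem check_fresh_edges_mem sink_edges_mem)
next
  have "(check_loc S, 0, CAnd (CEq Dat (Cur r)) (keep k), check_loc (insert r S)) \<in> check_edges k"
    if "r < k" "r \<notin> S" for r
    using assms that unfolding check_edges_mem by blast
  moreover have "(check_loc S, 0, CAnd (CEq Dat (Cur r)) (keep k), sink_loc) \<in> check_repeat_edges k"
    if "S \<noteq> {..<k}" "r \<in> S" for r
    using assms that unfolding check_repeat_edges_mem by blast
  moreover have "(check_loc S, 0, CAnd (fresh_datum k) (keep k), sink_loc) \<in> check_fresh_edges k"
    if "S \<noteq> {..<k}"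
    using assms that unfolding check_fresh_edges_mem by blast
  moreover have "(check_loc {..<k}, 0, keep k, sink_loc) \<in> sink_edges k"
    unfolding sink_edges_mem by blast
  moreover assume ?cases
  ultimately show ?edge unfolding perm_edges_split by blast
qed

lemma edge_from_sink_iff:
  "(sink_loc, a, \<phi>, l') \<in> perm_edges k \<longleftrightarrow> a = 0 \<and> \<phi> = keep k \<and> l' = sink_loc"
  unfolding perm_edges_split by (auto simp: edge_families_mem)

lemma perm_locs_intros:
  "i < k \<Longrightarrow> store_loc i \<in> perm_locs k"
  "S \<subseteq> {..<k} \<Longrightarrow> S \<noteq> {} \<Longrightarrow> guess_loc S \<in> perm_locs k"
  "1 \<le> j \<Longrightarrow> j \<le> k \<Longrightarrow> verify_loc j \<in> perm_locs k"
  "S \<subseteq> {..<k} \<Longrightarrow> check_loc S \<in> perm_locs k"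
  "sink_loc \<in> perm_locs k"
  "i < k \<Longrightarrow> store_phase k (Suc i) \<in> perm_locs k"
  by (auto simp: perm_locs_def store_phase_def)

lemma step_perm_ra:
  "step (perm_ra k) (l,u) (a,d) (l',v) \<longleftrightarrow> l \<in> perm_locs k \<and> length u = k \<and> l' \<in> perm_locs k \<and> length v = k
   \<and> (\<exists>\<phi>. (l,a,\<phi>,l') \<in> perm_edges k \<and> sat u d v \<phi>)"
  by (auto simp: step_def is_state_def)

lemma step_from_store:
  assumes "i<k" "length u = k"
  shows "step (perm_ra k) (store_loc i, u) (a,d) (l',v) \<longleftrightarrow> a = 0 \<and> (
     (d \<notin> stored u \<and> l' = store_phase k (Suc i) \<and> v = u[i:=Some d])
   \<or> (d \<in> stored u \<and> l' = sink_loc \<and> v = u)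
   \<or> (i = 0 \<and> d \<notin> stored u \<and> (\<exists>r<k. l' = guess_loc {r} \<and> v = u[r:=Some d])))"
proof -
  have guess: "r < k \<Longrightarrow> guess_loc {r} \<in> perm_locs k" for r
    using perm_locs_intros(2)[of "{r}" k] by auto
  show ?thesis
    unfolding step_perm_ra edge_from_store_iff
    using assms perm_locs_intros(1)[of i k] perm_locs_intros(5) perm_locs_intros(6)[of i k] guess
    by (auto simp: sat_fresh_datum sat_load list_update_beyond)
qed

lemma step_from_guess:
  assumes "S \<subseteq> {..<k}" "S \<noteq> {}" "length u = k"
  shows "step (perm_ra k) (guess_loc S, u) (a,d) (l',v) \<longleftrightarrow> a = 0 \<and> (
     (d \<notin> stored u \<and> (\<exists>r<k. r \<notin> S \<and> l' = guess_loc (insert r S) \<and> v = u[r:=Some d]))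
   \<or> (S = {..<k} \<and> u!0 = Some d \<and> l' = verify_loc 1 \<and> v = u))"
proof -
  have guess: "r < k \<Longrightarrow> guess_loc (insert r S) \<in> perm_locs k" for r
    using assms perm_locs_intros(2)[of "insert r S" k] by auto
  have verify: "S = {..<k} \<Longrightarrow> verify_loc 1 \<in> perm_locs k"
    using assms perm_locs_intros(3)[of 1 k] by auto
  show ?thesis
    unfolding step_perm_ra edge_from_guess_iff[OF assms(1,2)]
    using assms guess verify perm_locs_intros(2)[OF assms(1,2)]
    by (auto simp: sat_fresh_datum sat_load list_update_beyond)
qed

lemma step_from_verify:
  assumes "1 \<le> j" "j \<le> k" "length u = k"
  shows "step (perm_ra k) (verify_loc j, u) (a,d) (l',v) \<longleftrightarrow> a = 0 \<and> j < k \<and> u!j = Some d \<and> l' = verify_loc (Suc j) \<and> v = u"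
  unfolding step_perm_ra edge_from_verify_iff[OF assms(1)]
  using assms perm_locs_intros(3)[of j k] perm_locs_intros(3)[of "Suc j" k]
  by (auto simp: sat_load list_update_beyond)

lemma step_from_check:
  assumes "S \<subseteq> {..<k}" "length u = k"
  shows "step (perm_ra k) (check_loc S, u) (a,d) (l',v) \<longleftrightarrow> a = 0 \<and> v = u \<and> (
     (\<exists>r<k. r \<notin> S \<and> u!r = Some d \<and> l' = check_loc (insert r S))
   \<or> (S \<noteq> {..<k} \<and> (\<exists>r\<in>S. u!r = Some d) \<and> l' = sink_loc)
   \<or> (S \<noteq> {..<k} \<and> d \<notin> stored u \<and> l' = sink_loc)
   \<or> (S = {..<k} \<and> l' = sink_loc))"
proof -
  have check: "r < k \<Longrightarrow> check_loc (insert r S) \<in> perm_locs k" for r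
    using assms perm_locs_intros(4)[of "insert r S" k] by auto
  show ?thesis
    unfolding step_perm_ra edge_from_check_iff[OF assms(1)]
    using assms check perm_locs_intros(4)[OF assms(1)] perm_locs_intros(5)
    by (auto simp: sat_fresh_datum sat_load list_update_beyond)
qed

lemma step_from_sink:
  assumes "length u = k"
  shows "step (perm_ra k) (sink_loc, u) (a,d) (l',v) \<longleftrightarrow> a = 0 \<and> l' = sink_loc \<and> v = u"
  unfolding step_perm_ra edge_from_sink_iff using assms perm_locs_intros(5) by (auto simp: sat_load list_update_beyond)

definition inj_val :: "nat option list \<Rightarrow> bool" where
  "inj_val u \<longleftrightarrow> (\<forall>i<length u. \<forall>j<length u. i \<noteq> j \<longrightarrow> u!i \<noteq> None \<longrightarrow> u!i \<noteq> u!j)"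

definition filled :: "nat \<Rightarrow> nat set \<Rightarrow> nat option list \<Rightarrow> bool" where
  "filled k S u \<longleftrightarrow> length u = k \<and> inj_val u \<and> S \<subseteq> {..<k} \<and> (\<forall>r<k. (u!r = None) \<longleftrightarrow> r \<notin> S)"

definition all_filled :: "nat \<Rightarrow> nat option list \<Rightarrow> bool" where
  "all_filled k u \<longleftrightarrow> length u = k \<and> inj_val u \<and> (\<forall>r<k. u!r \<noteq> None)"

definition zero_letters :: "(nat \<times> nat) list \<Rightarrow> bool" where
  "zero_letters x \<longleftrightarrow> (\<forall>a\<in>set x. fst a = 0)"

lemma zero_letters_simps [simp]:
  "zero_letters []" "zero_letters (a#x) \<longleftrightarrow> fst a = 0 \<and> zero_letters x"
  by (auto simp: zero_letters_def)

lemma stored_update: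
  assumes "r < length u" "u!r = None"
  shows "stored (u[r:=Some d]) = insert d (stored u)"
proof
  show "stored (u[r:=Some d]) \<subseteq> insert d (stored u)"
  proof
    fix e assume "e \<in> stored (u[r:=Some d])"
    then obtain s where s: "s < length u" "u[r:=Some d]!s = Some e" by (auto simp: stored_def in_set_conv_nth)
    then show "e \<in> insert d (stored u)"
      by (cases "s = r") (auto simp: stored_def in_set_conv_nth nth_list_update)
  qed
  show "insert d (stored u) \<subseteq> stored (u[r:=Some d])"
  proof
    fix e assume "e \<in> insert d (stored u)"
    then show "e \<in> stored (u[r:=Some d])"
    proof
      assume "e = d" then show ?thesis using assms by (auto simp: stored_def in_set_conv_nth intro!: exI[of _ r])
    next
      assume "e \<in> stored u"
      then obtain s where s: "s < length u" "u!s = Some e" by (auto simp: stored_def in_set_conv_nth)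
      then have "s \<noteq> r" using assms by auto
      then show ?thesis using s by (auto simp: stored_def in_set_conv_nth intro!: exI[of _ s])
    qed
  qed
qed

lemma inj_val_update:
  assumes "inj_val u" "d \<notin> stored u"
  shows "inj_val (u[r:=Some d])"
  unfolding inj_val_def
proof (intro allI impI)
  fix i j assume h: "i < length (u[r:=Some d])" "j < length (u[r:=Some d])" "i \<noteq> j" "u[r:=Some d]!i \<noteq> None"
  have nd: "\<And>s. s < length u \<Longrightarrow> u!s \<noteq> Some d" using assms(2) by (auto simp: stored_def dest: nth_mem)
  have l: "i < length u" "j < length u" using h by auto
  show "u[r:=Some d]!i \<noteq> u[r:=Some d]!j" using h nd[OF l(1)] nd[OF l(2)] assms(1) l
    by (cases "i = r"; cases "j = r") (auto simp: inj_val_def nth_list_update)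
qed

lemma filled_update:
  assumes "filled k S u" "r < k" "r \<notin> S" "d \<notin> stored u"
  shows "filled k (insert r S) (u[r:=Some d])"
  using assms inj_val_update[of u d r] by (auto simp: filled_def nth_list_update)

lemma filled_all_filled: "filled k {..<k} u \<Longrightarrow> all_filled k u"
  by (auto simp: filled_def all_filled_def)

lemma finite_stored: "finite (stored u)"
proof -
  have "stored u \<subseteq> the ` set u" by (force simp: stored_def)
  then show ?thesis using finite_surj by blast
qed

lemma ex_not_stored: "\<exists>d. d \<notin> stored u"
  using finite_stored ex_new_if_finite[OF infinite_UNIV_nat] by blast

lemma perm_acc_simps [simp]:
  "store_loc i \<in> perm_acc k \<longleftrightarrow> i < k"
  "guess_loc S \<notin> perm_acc k"
  "verify_loc j \<in> perm_acc k \<longleftrightarrow> j = k"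
  "sink_loc \<in> perm_acc k"
  by (auto simp: perm_acc_def)

lemma check_loc_in_perm_acc:
  "S \<subseteq> {..<k} \<Longrightarrow> check_loc S \<in> perm_acc k \<longleftrightarrow> S \<noteq> {..<k}"
  by (auto simp: perm_acc_def finite_subset_lessThan)

lemma step_letter_zero: "step (perm_ra k) q a q' \<Longrightarrow> fst a = 0"
  by (auto simp: step_def perm_edges_split edge_families_mem)

lemma accepts_from_sink:
  "length u = k \<Longrightarrow> accepts_from (perm_ra k) (sink_loc, u) x \<longleftrightarrow> zero_letters x"
proof (induction x)
  case Nil then show ?case by (simp add: accepts_from_Nil)
next
  case (Cons a x)
  obtain c d where a: "a = (c,d)" by (cases a)
  have "accepts_from (perm_ra k) (sink_loc, u) (a#x) \<longleftrightarrow> c = 0 \<and> accepts_from (perm_ra k) (sink_loc, u) x"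
    unfolding accepts_from_Cons a using step_from_sink[OF Cons.prems] by auto
  then show ?case using Cons a by simp
qed

lemma accepts_from_verify:
  assumes "k \<ge> 1" "length b = k" "j \<le> k"
  shows "accepts_from (perm_ra k) (verify_from k j, map Some b) x \<longleftrightarrow> zero_letters x \<and> map snd x = drop j b"
  using assms(3)
proof (induction x arbitrary: j)
  case Nil
  have "verify_from k j \<in> perm_acc k \<longleftrightarrow> j = k" using assms by (auto simp: verify_from_def)
  then show ?case using Nil assms by (auto simp add: accepts_from_Nil)
next
  case (Cons a x)
  obtain c d where a: "a = (c,d)" by (cases a)
  have st: "step (perm_ra k) (verify_from k j, map Some b) (c,d) (l', v) \<longleftrightarrow>
       c = 0 \<and> j < k \<and> b!j = d \<and> l' = verify_from k (Suc j) \<and> v = map Some b" for l' v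
  proof (cases "j = 0")
    case True
    have ne: "{..<k} \<noteq> {}" using assms(1) by (simp add: lessThan_empty_iff)
    have "step (perm_ra k) (guess_loc {..<k}, map Some b) (c,d) (l', v) \<longleftrightarrow> c = 0 \<and> b!0 = d \<and> l' = verify_loc 1 \<and> v = map Some b"
      using step_from_guess[of "{..<k}" k "map Some b" c d l' v] ne assms by auto
    then show ?thesis using True assms by (auto simp: verify_from_def)
  next
    case False
    then show ?thesis using step_from_verify[of j k "map Some b" c d l' v] assms Cons.prems
      by (auto simp: verify_from_def)
  qed
  have "accepts_from (perm_ra k) (verify_from k j, map Some b) (a#x) \<longleftrightarrow>
      c = 0 \<and> j < k \<and> b!j = d \<and> accepts_from (perm_ra k) (verify_from k (Suc j), map Some b) x"
    unfolding accepts_from_Cons a using st by auto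
  also have "\<dots> \<longleftrightarrow> c = 0 \<and> j < k \<and> b!j = d \<and> zero_letters x \<and> map snd x = drop (Suc j) b"
    using Cons.IH[of "Suc j"] by auto
  also have "\<dots> \<longleftrightarrow> zero_letters (a#x) \<and> map snd (a#x) = drop j b"
    using assms a by (auto simp: Cons_nth_drop_Suc[symmetric]) (metis Cons_nth_drop_Suc drop_all not_le list.distinct(1) list.inject)+
  finally show ?case .
qed

lemma inj_valD:
  "inj_val u \<Longrightarrow> i < length u \<Longrightarrow> j < length u \<Longrightarrow> i \<noteq> j \<Longrightarrow> u!i \<noteq> None \<Longrightarrow> u!i \<noteq> u!j"
  by (simp add: inj_val_def)

definition unchecked_perm :: "nat \<Rightarrow> nat set \<Rightarrow> nat option list \<Rightarrow> (nat \<times> nat) list \<Rightarrow> bool" where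
  "unchecked_perm k S u x \<longleftrightarrow> distinct (map snd x) \<and> length x = k - card S
     \<and> set (map snd x) = (\<lambda>r. the (u!r)) ` ({..<k} - S)"

lemma all_filled_inj:
  assumes "all_filled k u"
  shows "inj_on (\<lambda>r. the (u!r)) {..<k}"
proof (rule inj_onI)
  fix i j assume h: "i \<in> {..<k}" "j \<in> {..<k}" "the (u!i) = the (u!j)"
  have "u!i = Some (the (u!i))" "u!j = Some (the (u!j))" using assms h(1,2) by (auto simp: all_filled_def)
  then have "u!i = u!j" using h(3) by simp
  moreover have "inj_val u" "length u = k" "u!i \<noteq> None" using assms h by (auto simp: all_filled_def)
  ultimately show "i = j" using inj_valD[of u i j] h by auto
qed

lemma all_filled_stored:
  assumes "all_filled k u"
  shows "stored u = (\<lambda>r. the (u!r)) ` {..<k}"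
proof
  show "stored u \<subseteq> (\<lambda>r. the (u!r)) ` {..<k}"
  proof
    fix d assume "d \<in> stored u"
    then obtain i where "i < length u" "u!i = Some d" by (auto simp: stored_def in_set_conv_nth)
    then show "d \<in> (\<lambda>r. the (u!r)) ` {..<k}" using assms by (auto simp: all_filled_def intro!: image_eqI[of _ _ i])
  qed
  show "(\<lambda>r. the (u!r)) ` {..<k} \<subseteq> stored u"
  proof
    fix d assume "d \<in> (\<lambda>r. the (u!r)) ` {..<k}"
    then obtain i where "i < k" "d = the (u!i)" by auto
    then have "u!i = Some d" using assms by (auto simp: all_filled_def)
    then show "d \<in> stored u" using \<open>i<k\<close> assms by (auto simp: stored_def all_filled_def in_set_conv_nth)
  qed
qed

lemma all_filled_Some:
  "all_filled k u \<Longrightarrow> r < k \<Longrightarrow> u!r = Some (the (u!r))"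
  by (auto simp: all_filled_def)

lemma unchecked_perm_Cons:
  assumes f: "all_filled k u" and S: "S \<subseteq> {..<k}" and r: "r < k" "r \<notin> S" "u!r = Some d"
  shows "unchecked_perm k S u ((c,d)#x) \<longleftrightarrow> unchecked_perm k (insert r S) u x"
proof -
  let ?f = "\<lambda>r. the (u!r)"
  have inj: "inj_on ?f {..<k}" using all_filled_inj[OF f] .
  have fr: "?f r = d" using r by simp
  have fin: "finite S" using S finite_subset_lessThan by blast
  have cS: "card S < k"
  proof -
    have "S \<subset> {..<k}" using S r by auto
    then show ?thesis using psubset_card_mono[of "{..<k}" S] by auto
  qed
  have ci: "card (insert r S) = Suc (card S)" using fin r by simp
  have img: "?f ` ({..<k} - insert r S) = ?f ` ({..<k} - S) - {d}"
  proof -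
    have "{..<k} - insert r S = ({..<k} - S) - {r}" by auto
    then have "?f ` ({..<k} - insert r S) = ?f ` ({..<k} - S) - ?f ` {r}"
      using inj_on_image_set_diff[OF inj, of "{..<k} - S" "{r}"] r by auto
    then show ?thesis using fr by simp
  qed
  have dimg: "d \<in> ?f ` ({..<k} - S)" using r fr by (auto intro!: image_eqI[of _ _ r])
  show ?thesis
  proof
    assume "unchecked_perm k S u ((c,d)#x)"
    then have h: "distinct (d # map snd x)" "Suc (length x) = k - card S"
      "insert d (set (map snd x)) = ?f ` ({..<k} - S)" by (auto simp: unchecked_perm_def)
    have "set (map snd x) = ?f ` ({..<k} - S) - {d}" using h(1) h(3) by auto
    then show "unchecked_perm k (insert r S) u x" using h ci img by (auto simp: unchecked_perm_def)
  next
    assume "unchecked_perm k (insert r S) u x"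
    then have h: "distinct (map snd x)" "length x = k - Suc (card S)"
      "set (map snd x) = ?f ` ({..<k} - S) - {d}" using ci img by (auto simp: unchecked_perm_def)
    have "d \<notin> set (map snd x)" using h(3) by auto
    moreover have "insert d (set (map snd x)) = ?f ` ({..<k} - S)" using h(3) dimg by auto
    ultimately show "unchecked_perm k S u ((c,d)#x)" using h cS by (auto simp: unchecked_perm_def)
  qed
qed

lemma all_filled_reg_unique:
  "all_filled k u \<Longrightarrow> r < k \<Longrightarrow> s < k \<Longrightarrow> u ! r = Some d \<Longrightarrow> u ! s = Some d \<Longrightarrow> r = s"
  using inj_valD[of u r s] by (auto simp: all_filled_def)

lemma step_from_check_unchecked:
  assumes u: "all_filled k u" and S: "S \<subseteq> {..<k}" and r: "r < k" "r \<notin> S" "u ! r = Some d"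
  shows "step (perm_ra k) (check_loc S, u) (c, d) (l', v) \<longleftrightarrow>
    c = 0 \<and> v = u \<and> l' = check_loc (insert r S)"
proof -
  have lu: "length u = k" using u by (simp add: all_filled_def)
  have only_r: "s = r" if "s < k" "u ! s = Some d" for s
    using all_filled_reg_unique[OF u that(1) r(1) that(2) r(3)] .
  have "d \<in> stored u" using r lu by (auto simp: stored_def in_set_conv_nth)
  moreover have "\<not> (\<exists>s\<in>S. u ! s = Some d)" using only_r S r(2) by blast
  ultimately show ?thesis
    unfolding step_from_check[OF S lu] using only_r r by blast
qed

lemma step_from_check_other:
  assumes u: "all_filled k u" and S: "S \<subseteq> {..<k}" and d: "\<not> (\<exists>r<k. r \<notin> S \<and> u ! r = Some d)"
  shows "step (perm_ra k) (check_loc S, u) (c, d) (l', v) \<longleftrightarrow> c = 0 \<and> v = u \<and> l' = sink_loc"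
proof -
  have lu: "length u = k" using u by (simp add: all_filled_def)
  have "d \<in> stored u \<Longrightarrow> \<exists>r\<in>S. u ! r = Some d" using d lu by (auto simp: stored_def in_set_conv_nth)
  then show ?thesis unfolding step_from_check[OF S lu] using d by blast
qed

lemma accepts_from_check:
  assumes u: "all_filled k u"
  shows "S \<subseteq> {..<k} \<Longrightarrow>
    accepts_from (perm_ra k) (check_loc S, u) x \<longleftrightarrow> zero_letters x \<and> \<not> unchecked_perm k S u x"
proof (induction x arbitrary: S)
  case Nil
  have "unchecked_perm k S u [] \<longleftrightarrow> S = {..<k}"
    using Nil by (auto simp: unchecked_perm_def)
  then show ?case using Nil by (simp add: accepts_from_Nil check_loc_in_perm_acc)
next
  case (Cons a x)
  obtain c d where a: "a = (c, d)" by (cases a)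
  have lu: "length u = k" using u by (simp add: all_filled_def)
  show ?case
  proof (cases "\<exists>r<k. r \<notin> S \<and> u ! r = Some d")
    case True
    then obtain r where r: "r < k" "r \<notin> S" "u ! r = Some d" by blast
    have "accepts_from (perm_ra k) (check_loc S, u) (a # x) \<longleftrightarrow>
        c = 0 \<and> accepts_from (perm_ra k) (check_loc (insert r S), u) x"
      unfolding a accepts_from_Cons split_paired_Ex step_from_check_unchecked[OF u Cons.prems r]
      by auto
    also have "\<dots> \<longleftrightarrow> c = 0 \<and> zero_letters x \<and> \<not> unchecked_perm k (insert r S) u x"
      using Cons.IH[of "insert r S"] Cons.prems r by auto
    finally show ?thesis using unchecked_perm_Cons[OF u Cons.prems r] a by simp
  next
    case False
    have "accepts_from (perm_ra k) (check_loc S, u) (a # x) \<longleftrightarrow> c = 0 \<and> zero_letters x"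
      unfolding a accepts_from_Cons split_paired_Ex step_from_check_other[OF u Cons.prems False]
      using accepts_from_sink[OF lu] by auto
    moreover have "\<not> unchecked_perm k S u ((c, d) # x)"
    proof
      assume "unchecked_perm k S u ((c, d) # x)"
      then obtain r where "r < k" "r \<notin> S" "d = the (u ! r)" by (auto simp: unchecked_perm_def)
      then show False using False all_filled_Some[OF u, of r] by auto
    qed
    ultimately show ?thesis using a by simp
  qed
qed

section \<open>The deterministic branch\<close>

text \<open>The words rejected by the deterministic branch from location store_loc i: the k - i data
  still to be stored, all fresh, followed by a permutation of all k data.\<close>
definition store_completes :: "nat \<Rightarrow> nat \<Rightarrow> nat option list \<Rightarrow> (nat \<times> nat) list \<Rightarrow> bool" where
  "store_completes k i u x \<longleftrightarrow> (\<exists>ys b. map snd x = ys @ b \<and> length ys = k - i \<and> distinct ys \<and> set ys \<inter> stored u = {}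
      \<and> length b = k \<and> set b = stored u \<union> set ys)"

lemma card_stored_all_filled:
  assumes "all_filled k u"
  shows "card (stored u) = k"
  using card_image[OF all_filled_inj[OF assms]] all_filled_stored[OF assms] by simp

lemma accepts_from_check_empty:
  assumes f: "all_filled k u"
  shows "accepts_from (perm_ra k) (check_loc {}, u) x \<longleftrightarrow> zero_letters x \<and> \<not> store_completes k k u x"
proof -
  have "unchecked_perm k {} u x \<longleftrightarrow> store_completes k k u x"
  proof
    assume "unchecked_perm k {} u x" then show "store_completes k k u x"
      using all_filled_stored[OF f] by (auto simp: unchecked_perm_def store_completes_def)
  next
    assume "store_completes k k u x"
    then have h: "length (map snd x) = k" "set (map snd x) = stored u" by (auto simp: store_completes_def)
    then have "distinct (map snd x)" using card_stored_all_filled[OF f] by (simp add: card_distinct)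
    then show "unchecked_perm k {} u x" using h all_filled_stored[OF f] by (simp add: unchecked_perm_def)
  qed
  then show ?thesis using accepts_from_check[OF f, of "{}"] by simp
qed

lemma store_completes_Cons:
  assumes "d \<notin> stored u" "stored u' = insert d (stored u)" "i < k"
  shows "store_completes k i u ((c,d)#x) \<longleftrightarrow> store_completes k (Suc i) u' x"
proof
  assume "store_completes k i u ((c,d)#x)"
  then obtain ys b where h: "d # map snd x = ys @ b" "length ys = k - i" "distinct ys"
    "set ys \<inter> stored u = {}" "length b = k" "set b = stored u \<union> set ys" by (auto simp: store_completes_def)
  obtain ys' where ys: "ys = d # ys'" "map snd x = ys' @ b"
    using h(1,2) assms(3) by (cases ys) auto
  show "store_completes k (Suc i) u' x" unfolding store_completes_def
    using h ys assms by (intro exI[of _ ys'] exI[of _ b]) auto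
next
  assume "store_completes k (Suc i) u' x"
  then obtain ys b where h: "map snd x = ys @ b" "length ys = k - Suc i" "distinct ys"
    "set ys \<inter> stored u' = {}" "length b = k" "set b = stored u' \<union> set ys" by (auto simp: store_completes_def)
  show "store_completes k i u ((c,d)#x)" unfolding store_completes_def
    using h assms by (intro exI[of _ "d#ys"] exI[of _ b]) auto
qed

lemma accepts_from_store:
  assumes k: "k \<ge> 1"
  shows "1 \<le> i \<Longrightarrow> i \<le> k \<Longrightarrow> filled k {..<i} u \<Longrightarrow>
     accepts_from (perm_ra k) (store_phase k i, u) x \<longleftrightarrow> zero_letters x \<and> \<not> store_completes k i u x"
proof (induction x arbitrary: i u)
  case Nil
  show ?case
  proof (cases "i = k")
    case True then show ?thesis using accepts_from_check_empty[of k u "[]"] filled_all_filled Nil by (simp add: store_phase_def)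
  next
    case False
    have "\<not> store_completes k i u []" using k by (auto simp: store_completes_def)
    then show ?thesis using False Nil by (simp add: store_phase_def accepts_from_Nil)
  qed
next
  case (Cons a x)
  obtain c d where a: "a = (c,d)" by (cases a)
  show ?case
  proof (cases "i = k")
    case True then show ?thesis using accepts_from_check_empty[of k u] filled_all_filled Cons.prems by (simp add: store_phase_def)
  next
    case False
    then have ik: "i < k" using Cons.prems by simp
    have lu: "length u = k" using Cons.prems by (simp add: filled_def)
    have loc: "store_phase k i = store_loc i" using False by (simp add: store_phase_def)
    show ?thesis
    proof (cases "d \<in> stored u")
      case True
      have st: "step (perm_ra k) (store_loc i, u) (c,d) (l',v) \<longleftrightarrow> c = 0 \<and> v = u \<and> l' = sink_loc" for l' v
        unfolding step_from_store[OF ik lu] using True Cons.prems by auto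
      have "accepts_from (perm_ra k) (store_loc i, u) (a#x) \<longleftrightarrow> c = 0 \<and> zero_letters x"
        unfolding a accepts_from_Cons split_paired_Ex st using accepts_from_sink[OF lu] by auto
      moreover have "\<not> store_completes k i u ((c,d)#x)"
      proof
        assume "store_completes k i u ((c,d)#x)"
        then obtain ys b where h: "d # map snd x = ys @ b" "length ys = k - i"
          "set ys \<inter> stored u = {}" by (auto simp: store_completes_def)
        then obtain ys' where "ys = d # ys'" using ik by (cases ys) auto
        then show False using h True by auto
      qed
      ultimately show ?thesis using a loc by simp
    next
      case fr: False
      let ?u' = "u[i := Some d]"
      have st: "step (perm_ra k) (store_loc i, u) (c,d) (l',v) \<longleftrightarrow> c = 0 \<and> v = ?u' \<and> l' = store_phase k (Suc i)" for l' v
        unfolding step_from_store[OF ik lu] using fr Cons.prems by auto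
      have ui: "u!i = None" using Cons.prems ik by (auto simp: filled_def)
      have sh: "filled k {..<Suc i} ?u'"
        using filled_update[OF Cons.prems(3) ik _ fr] lessThan_Suc by auto
      have vu: "stored ?u' = insert d (stored u)" using stored_update[of i u d] ik lu ui by simp
      have "accepts_from (perm_ra k) (store_loc i, u) (a#x) \<longleftrightarrow> c = 0 \<and> accepts_from (perm_ra k) (store_phase k (Suc i), ?u') x"
        unfolding a accepts_from_Cons split_paired_Ex st by auto
      also have "\<dots> \<longleftrightarrow> c = 0 \<and> zero_letters x \<and> \<not> store_completes k (Suc i) ?u' x"
        using Cons.IH[OF _ _ sh] ik by auto
      finally show ?thesis using store_completes_Cons[OF fr vu ik] a loc by simp
    qed
  qed
qed

section \<open>The guessing branch\<close>

text \<open>The words accepted by the guessing branch from the guessing location of S: as above,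
  but the permutation must list every stored datum at the index of its register.\<close>
definition guess_completes :: "nat \<Rightarrow> nat set \<Rightarrow> nat option list \<Rightarrow> (nat \<times> nat) list \<Rightarrow> bool" where
  "guess_completes k S u x \<longleftrightarrow> (\<exists>ys b. map snd x = ys @ b \<and> length ys = k - card S \<and> distinct ys \<and> set ys \<inter> stored u = {}
      \<and> length b = k \<and> distinct b \<and> set b = stored u \<union> set ys \<and> (\<forall>r<k. r \<in> S \<longrightarrow> u!r = Some (b!r)))"

lemma step_guess_from:
  assumes k: "k \<ge> 1" and sh: "filled k S u" and r: "r < k" "r \<notin> S" and d: "d \<notin> stored u"
  shows "step (perm_ra k) (guess_from k S, u) (0,d) (guess_loc (insert r S), u[r:=Some d])"
proof -
  have lu: "length u = k" using sh by (simp add: filled_def)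
  have nf: "d \<notin> stored u" using d by simp
  show ?thesis
  proof (cases "S = {}")
    case True
    then show ?thesis using step_from_store[of 0 k u 0 d "guess_loc {r}" "u[r:=Some d]"] k lu nf r
      by (auto simp: guess_from_def)
  next
    case False
    have "S \<subseteq> {..<k}" using sh by (simp add: filled_def)
    then show ?thesis using step_from_guess[of S k u 0 d "guess_loc (insert r S)" "u[r:=Some d]"] False lu nf r
      by (auto simp: guess_from_def)
  qed
qed

lemma all_filled_list:
  assumes "all_filled k u"
  shows "u = map Some (map the u)" "distinct (map the u)" "set (map the u) = stored u" "length (map the u) = k"
proof -
  have lu: "length u = k" using assms by (simp add: all_filled_def)
  show u: "u = map Some (map the u)"
    using assms by (auto simp: all_filled_def intro!: nth_equalityI)
  show "distinct (map the u)"
  proof -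
    have "inj_on (\<lambda>r. the (u!r)) {..<k}" by (rule all_filled_inj[OF assms])
    then show ?thesis using lu by (auto simp: distinct_conv_nth inj_on_def)
  qed
  show "set (map the u) = stored u"
  proof -
    have "set (map the u) = (\<lambda>r. the (u!r)) ` {..<k}"
    proof
      show "set (map the u) \<subseteq> (\<lambda>r. the (u!r)) ` {..<k}"
      proof
        fix e assume "e \<in> set (map the u)"
        then obtain i where "i < length u" "e = the (u!i)" by (auto simp: in_set_conv_nth)
        then show "e \<in> (\<lambda>r. the (u!r)) ` {..<k}" using lu by auto
      qed
      show "(\<lambda>r. the (u!r)) ` {..<k} \<subseteq> set (map the u)"
      proof
        fix e assume "e \<in> (\<lambda>r. the (u!r)) ` {..<k}"
        then obtain i where "i < k" "e = the (u!i)" by auto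
        then show "e \<in> set (map the u)" using lu by (auto simp: in_set_conv_nth intro!: exI[of _ i])
      qed
    qed
    then show ?thesis using all_filled_stored[OF assms] by simp
  qed
  show "length (map the u) = k" using lu by simp
qed

lemma card_less_if_missing:
  "S \<subseteq> {..<k} \<Longrightarrow> r < k \<Longrightarrow> r \<notin> S \<Longrightarrow> card S < (k::nat)"
proof -
  assume a: "S \<subseteq> {..<k}" "r < k" "r \<notin> S"
  then have "S \<subset> {..<k}" by auto
  then show ?thesis using psubset_card_mono[of "{..<k}" S] by auto
qed

lemma accepts_from_guess_completes:
  assumes k: "k \<ge> 1"
  shows "S \<noteq> {} \<Longrightarrow> filled k S u \<Longrightarrow> accepts_from (perm_ra k) (guess_loc S, u) x \<Longrightarrow> guess_completes k S u x"
proof (induction x arbitrary: S u)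
  case Nil then show ?case by (simp add: accepts_from_Nil)
next
  case (Cons a x)
  obtain c d where a: "a = (c,d)" by (cases a)
  have lu: "length u = k" and S_sub: "S \<subseteq> {..<k}" using Cons.prems by (auto simp: filled_def)
  from Cons.prems(3) obtain l' v where st: "step (perm_ra k) (guess_loc S, u) (c,d) (l',v)"
    and ac: "accepts_from (perm_ra k) (l',v) x" by (auto simp: accepts_from_Cons a)
  from st[unfolded step_from_guess[OF S_sub Cons.prems(1) lu]]
  have "(d \<notin> stored u \<and> (\<exists>r<k. r \<notin> S \<and> l' = guess_loc (insert r S) \<and> v = u[r:=Some d]))
      \<or> (S = {..<k} \<and> u!0 = Some d \<and> l' = verify_loc 1 \<and> v = u)" by auto
  then show ?case
  proof
    assume "d \<notin> stored u \<and> (\<exists>r<k. r \<notin> S \<and> l' = guess_loc (insert r S) \<and> v = u[r:=Some d])"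
    then obtain r where r: "r < k" "r \<notin> S" and l': "l' = guess_loc (insert r S)" and v: "v = u[r:=Some d]"
      and nf: "d \<notin> stored u" by blast
    have dv: "d \<notin> stored u" using nf by simp
    have sh: "filled k (insert r S) v" using filled_update[OF Cons.prems(2) r dv] v by simp
    have ur: "u!r = None" using Cons.prems(2) r by (auto simp: filled_def)
    have vv: "stored v = insert d (stored u)" using stored_update[of r u d] r lu ur v by simp
    have "guess_completes k (insert r S) v x" using Cons.IH[OF _ sh] ac l' by simp
    then obtain ys b where h: "map snd x = ys @ b" "length ys = k - card (insert r S)" "distinct ys"
      "set ys \<inter> stored v = {}" "length b = k" "distinct b" "set b = stored v \<union> set ys"
      "\<forall>r'<k. r' \<in> insert r S \<longrightarrow> v!r' = Some (b!r')" unfolding guess_completes_def by blast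
    have fin: "finite S" using S_sub finite_subset_lessThan by blast
    have cS: "card S < k" using card_less_if_missing[OF S_sub r] .
    have ci: "card (insert r S) = Suc (card S)" using fin r by simp
    have agree: "\<forall>r'<k. r' \<in> S \<longrightarrow> u!r' = Some (b!r')"
    proof (intro allI impI)
      fix r' assume "r' < k" "r' \<in> S"
      then have "r' \<noteq> r" "v!r' = Some (b!r')" using h(8) r by auto
      then show "u!r' = Some (b!r')" using v by simp
    qed
    show "guess_completes k S u (a#x)" unfolding guess_completes_def
    proof (rule exI[of _ "d#ys"], rule exI[of _ b], intro conjI)
      show "map snd (a#x) = (d#ys) @ b" using a h(1) by simp
      show "length (d#ys) = k - card S" using h(2) ci cS by simp
      show "distinct (d#ys)" using h(3,4) vv by auto
      show "set (d#ys) \<inter> stored u = {}" using h(4) vv dv by auto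
      show "length b = k" "distinct b" by (fact h(5), fact h(6))
      show "set b = stored u \<union> set (d#ys)" using h(7) vv by auto
    qed (fact agree)
  next
    assume h: "S = {..<k} \<and> u!0 = Some d \<and> l' = verify_loc 1 \<and> v = u"
    have f: "all_filled k u" using filled_all_filled Cons.prems(2) h by simp
    let ?b = "map the u"
    note fl = all_filled_list[OF f]
    have "accepts_from (perm_ra k) (verify_from k 1, map Some ?b) x" using ac h fl(1) by (simp add: verify_from_def)
    then have m1: "map snd x = drop 1 ?b" using accepts_from_verify[OF k fl(4), of 1 x] k by simp
    have m2: "?b ! 0 = d" using h k lu by simp
    have ag: "\<forall>r<k. r \<in> S \<longrightarrow> u!r = Some (?b!r)" using all_filled_Some[OF f] lu by auto
    have "?b \<noteq> []" using k lu by (cases u) auto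
    then have "?b = ?b!0 # drop 1 ?b" by (cases ?b) auto
    then have eq: "map snd (a#x) = ?b" using a m1 m2 by simp
    show "guess_completes k S u (a#x)" unfolding guess_completes_def
      apply (rule exI[of _ "[]"], rule exI[of _ ?b])
      using eq fl(2,3) lu ag h by simp
  qed
qed

lemma guess_completes_accepts:
  assumes k: "k \<ge> 1"
  shows "filled k S u \<Longrightarrow> zero_letters x \<Longrightarrow> guess_completes k S u x \<Longrightarrow> accepts_from (perm_ra k) (guess_from k S, u) x"
proof (induction x arbitrary: S u)
  case Nil
  then show ?case using k by (auto simp: guess_completes_def)
next
  case (Cons a x)
  obtain c d where a: "a = (c,d)" by (cases a)
  have c: "c = 0" using Cons.prems(2) a by simp
  have lu: "length u = k" and S_sub: "S \<subseteq> {..<k}" using Cons.prems by (auto simp: filled_def)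
  from Cons.prems(3) obtain ys b where h: "d # map snd x = ys @ b" "length ys = k - card S" "distinct ys"
      "set ys \<inter> stored u = {}" "length b = k" "distinct b" "set b = stored u \<union> set ys"
      "\<forall>r<k. r \<in> S \<longrightarrow> u!r = Some (b!r)" unfolding guess_completes_def a by auto
  show ?case
  proof (cases "S = {..<k}")
    case True
    have "ys = []" using h(2) True by simp
    then have bx: "b = d # map snd x" using h(1) by simp
    have ub: "u = map Some b" using h(8) True lu h(5) by (auto intro!: nth_equalityI)
    have ne: "S \<noteq> {}" using True k by (auto simp: lessThan_empty_iff)
    have "guess_from k S = verify_from k 0" using True ne by (simp add: guess_from_def verify_from_def)
    then show ?thesis using accepts_from_verify[OF k h(5), of 0 "a#x"] ub bx Cons.prems(2) a by simp
  next
    case False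
    then obtain r0 where "r0 < k" "r0 \<notin> S" using S_sub by auto
    then have cS: "card S < k" using card_less_if_missing[OF S_sub] by blast
    then obtain ys' where ys: "ys = d # ys'" using h(1) h(2) by (cases ys) auto
    have mx: "map snd x = ys' @ b" using h(1) ys by simp
    have "d \<in> set b" using h(7) ys by auto
    then obtain r where r: "r < k" "b!r = d" using h(5) by (auto simp: in_set_conv_nth)
    have dv: "d \<notin> stored u" using h(4) ys by auto
    have rS: "r \<notin> S"
    proof
      assume "r \<in> S" then have "u!r = Some d" using h(8) r by auto
      then have "d \<in> stored u" using r lu by (auto simp: stored_def in_set_conv_nth)
      then show False using dv by simp
    qed
    let ?v = "u[r:=Some d]"
    have sh: "filled k (insert r S) ?v" using filled_update[OF Cons.prems(1) r(1) rS dv] .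
    have ur: "u!r = None" using Cons.prems(1) r rS by (auto simp: filled_def)
    have vv: "stored ?v = insert d (stored u)" using stored_update[of r u d] r lu ur by simp
    have fin: "finite S" using S_sub finite_subset_lessThan by blast
    have ci: "card (insert r S) = Suc (card S)" using fin rS by simp
    have "guess_completes k (insert r S) ?v x" unfolding guess_completes_def
    proof (rule exI[of _ ys'], rule exI[of _ b], intro conjI)
      show "map snd x = ys' @ b" by (fact mx)
      show "length ys' = k - card (insert r S)" using h(2) ys ci by simp
      show "distinct ys'" using h(3) ys by simp
      show "set ys' \<inter> stored ?v = {}" using h(3,4) ys vv by auto
      show "length b = k" "distinct b" by (fact h(5), fact h(6))
      show "set b = stored ?v \<union> set ys'" using h(7) ys vv by auto
      show "\<forall>r'<k. r' \<in> insert r S \<longrightarrow> ?v!r' = Some (b!r')"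
        using h(8) r lu by (auto simp: nth_list_update)
    qed
    then have "accepts_from (perm_ra k) (guess_from k (insert r S), ?v) x" using Cons.IH[OF sh] Cons.prems(2) by simp
    moreover have "guess_from k (insert r S) = guess_loc (insert r S)" by (simp add: guess_from_def)
    moreover have "step (perm_ra k) (guess_from k S, u) a (guess_loc (insert r S), ?v)" using step_guess_from[OF k Cons.prems(1) r(1) rS dv] a c by simp
    ultimately show ?thesis by (auto simp: accepts_from_Cons)
  qed
qed

lemma guess_from_accepts_some:
  assumes k: "k \<ge> 1"
  shows "filled k S u \<Longrightarrow> \<exists>x. zero_letters x \<and> accepts_from (perm_ra k) (guess_from k S, u) x"
proof (induction "k - card S" arbitrary: S u rule: less_induct)
  case less
  have lu: "length u = k" and S_sub: "S \<subseteq> {..<k}" using less.prems by (auto simp: filled_def)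
  show ?case
  proof (cases "S = {..<k}")
    case True
    have f: "all_filled k u" using filled_all_filled less.prems True by simp
    note fl = all_filled_list[OF f]
    have ne: "S \<noteq> {}" using True k by (auto simp: lessThan_empty_iff)
    have "guess_from k S = verify_from k 0" using True ne by (simp add: guess_from_def verify_from_def)
    moreover have "accepts_from (perm_ra k) (verify_from k 0, map Some (map the u)) (map (Pair 0) (map the u))"
      using accepts_from_verify[OF k fl(4), of 0] by (simp add: zero_letters_def comp_def)
    ultimately show ?thesis using fl(1) by (intro exI[of _ "map (Pair 0) (map the u)"]) (auto simp: zero_letters_def)
  next
    case False
    then obtain r where r: "r < k" "r \<notin> S" using S_sub by auto
    obtain d where dv: "d \<notin> stored u" using ex_not_stored by blast
    let ?v = "u[r:=Some d]"
    have sh: "filled k (insert r S) ?v" using filled_update[OF less.prems r dv] .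
    have fin: "finite S" using S_sub finite_subset_lessThan by blast
    have "k - card (insert r S) < k - card S" using card_less_if_missing[OF S_sub r] fin r by simp
    then obtain x where x: "zero_letters x" "accepts_from (perm_ra k) (guess_from k (insert r S), ?v) x"
      using less.hyps sh by blast
    have "step (perm_ra k) (guess_from k S, u) (0,d) (guess_loc (insert r S), ?v)" using step_guess_from[OF k less.prems r dv] .
    moreover have "guess_from k (insert r S) = guess_loc (insert r S)" by (simp add: guess_from_def)
    ultimately have "accepts_from (perm_ra k) (guess_from k S, u) ((0,d)#x)" using x unfolding accepts_from_Cons by auto
    then show ?thesis using x by (intro exI[of _ "(0,d)#x"]) simp
  qed
qed

section \<open>Reachable states\<close>

inductive reach_inv :: "nat \<Rightarrow> nat state \<Rightarrow> bool" for k where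
  store: "i < k \<Longrightarrow> filled k {..<i} u \<Longrightarrow> reach_inv k (store_loc i, u)"
| guess: "S \<noteq> {} \<Longrightarrow> filled k S u \<Longrightarrow> reach_inv k (guess_loc S, u)"
| verify: "1 \<le> j \<Longrightarrow> j \<le> k \<Longrightarrow> all_filled k u \<Longrightarrow> reach_inv k (verify_loc j, u)"
| check: "S \<subseteq> {..<k} \<Longrightarrow> all_filled k u \<Longrightarrow> reach_inv k (check_loc S, u)"
| sink: "length u = k \<Longrightarrow> inj_val u \<Longrightarrow> reach_inv k (sink_loc, u)"

lemma init_state_perm_ra: "init_state (perm_ra k) = (store_loc 0, replicate k None)"
  by (simp add: init_state_def)

lemma filled_init: "filled k {} (replicate k None)"
  by (auto simp: filled_def inj_val_def)

lemma reach_inv_init: "k \<ge> 1 \<Longrightarrow> reach_inv k (init_state (perm_ra k))"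
  using reach_inv.store[of 0 k] filled_init by (simp add: init_state_perm_ra)

lemma reach_inv_inj_val: "reach_inv k q \<Longrightarrow> length (snd q) = k \<and> inj_val (snd q)"
  by (cases rule: reach_inv.cases) (auto simp: filled_def all_filled_def)

lemma reach_inv_step_from_store:
  assumes "i < k" "filled k {..<i} u" "step (perm_ra k) (store_loc i, u) (c, d) (l', v)"
  shows "reach_inv k (l', v)"
proof -
  have "length u = k" using assms(2) by (simp add: filled_def)
  from assms(3)[unfolded step_from_store[OF assms(1) this]] consider
      (store) "d \<notin> stored u" "l' = store_phase k (Suc i)" "v = u[i := Some d]"
    | (abort) "l' = sink_loc" "v = u"
    | (guess) r where "i = 0" "d \<notin> stored u" "r < k" "l' = guess_loc {r}" "v = u[r := Some d]"
    by auto
  then show ?thesis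
  proof cases
    case store
    then have "filled k {..<Suc i} v" using filled_update[OF assms(2,1)] by (simp add: lessThan_Suc)
    then show ?thesis
      using store assms(1) filled_all_filled[of k v]
      by (auto simp: store_phase_def intro: reach_inv.store reach_inv.check)
  next
    case abort
    then show ?thesis using assms(2) by (auto simp: filled_def intro: reach_inv.sink)
  qed (use assms(2) filled_update[of k "{..<i}" u] in \<open>auto intro: reach_inv.guess\<close>)
qed

lemma reach_inv_step_from_guess:
  assumes "k \<ge> 1" "S \<noteq> {}" "filled k S u" "step (perm_ra k) (guess_loc S, u) (c, d) (l', v)"
  shows "reach_inv k (l', v)"
proof -
  have "length u = k" "S \<subseteq> {..<k}" using assms(3) by (auto simp: filled_def)
  from assms(4)[unfolded step_from_guess[OF this(2) assms(2) this(1)]] consider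
      (guess) r where "d \<notin> stored u" "r < k" "r \<notin> S" "l' = guess_loc (insert r S)" "v = u[r := Some d]"
    | (verify) "S = {..<k}" "l' = verify_loc 1" "v = u"
    by auto
  then show ?thesis
  proof cases
    case guess
    then show ?thesis using filled_update[OF assms(3)] by (auto intro: reach_inv.guess)
  next
    case verify
    then show ?thesis using assms(1,3) filled_all_filled by (auto intro: reach_inv.verify)
  qed
qed

lemma reach_inv_step:
  assumes "k \<ge> 1" "reach_inv k q" "step (perm_ra k) q a q'"
  shows "reach_inv k q'"
proof -
  obtain c d l' v where [simp]: "a = (c, d)" "q' = (l', v)" by (cases a, cases q') auto
  have step: "step (perm_ra k) q (c, d) (l', v)" using assms(3) by simp
  show ?thesis
    using assms(2)
  proof cases
    case (store i u)
    then show ?thesis using reach_inv_step_from_store step by simp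
  next
    case (guess S u)
    then show ?thesis using reach_inv_step_from_guess assms(1) step by simp
  next
    case (verify j u)
    then have "length u = k" by (simp add: all_filled_def)
    then show ?thesis using verify step step_from_verify by (auto intro: reach_inv.verify)
  next
    case (check S u)
    then have "length u = k" by (simp add: all_filled_def)
    then show ?thesis using check step step_from_check[OF check(2)] all_filled_def
      by (auto intro: reach_inv.check reach_inv.sink)
  next
    case (sink u)
    then show ?thesis using step step_from_sink by (auto intro: reach_inv.sink)
  qed
qed

lemma guess_choice_unique:
  assumes k: "k \<ge> 1" and sh: "filled k S u" and dv: "d \<notin> stored u"
  and r: "r1 < k" "r1 \<notin> S" "r2 < k" "r2 \<notin> S"
  and a1: "accepts_from (perm_ra k) (guess_loc (insert r1 S), u[r1:=Some d]) w"
  and a2: "accepts_from (perm_ra k) (guess_loc (insert r2 S), u[r2:=Some d]) w"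
  shows "r1 = r2"
proof -
  have lu: "length u = k" and S_sub: "S \<subseteq> {..<k}" using sh by (auto simp: filled_def)
  have fin: "finite S" using S_sub finite_subset_lessThan by blast
  have sh1: "filled k (insert r1 S) (u[r1:=Some d])" using filled_update[OF sh r(1,2) dv] .
  have sh2: "filled k (insert r2 S) (u[r2:=Some d])" using filled_update[OF sh r(3,4) dv] .
  obtain ys1 b1 where h1: "map snd w = ys1 @ b1" "length ys1 = k - card (insert r1 S)" "distinct b1" "length b1 = k"
    "\<forall>r<k. r \<in> insert r1 S \<longrightarrow> u[r1:=Some d]!r = Some (b1!r)"
    using accepts_from_guess_completes[OF k _ sh1 a1] unfolding guess_completes_def by blast
  obtain ys2 b2 where h2: "map snd w = ys2 @ b2" "length ys2 = k - card (insert r2 S)"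
    "\<forall>r<k. r \<in> insert r2 S \<longrightarrow> u[r2:=Some d]!r = Some (b2!r)"
    using accepts_from_guess_completes[OF k _ sh2 a2] unfolding guess_completes_def by blast
  have "card (insert r1 S) = card (insert r2 S)" using fin r by simp
  then have "length ys1 = length ys2" using h1(2) h2(2) by simp
  then have "b1 = b2" using h1(1) h2(1) by (simp add: append_eq_append_conv)
  moreover have "b1!r1 = d" using h1(5) r lu by auto
  moreover have "b2!r2 = d" using h2(3) r lu by auto
  ultimately have "b1!r1 = b1!r2" by simp
  then show ?thesis using h1(3,4) r by (simp add: nth_eq_iff_index_eq)
qed

lemma stored_init: "filled k {} u \<Longrightarrow> stored u = {}"
  by (auto simp: filled_def stored_def in_set_conv_nth)

lemma store_guess_exclusive:
  assumes k: "k \<ge> 1" and sh: "filled k {} u" and r: "r < k"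
  and a1: "accepts_from (perm_ra k) (store_phase k (Suc 0), u[0:=Some d]) w"
  and a2: "accepts_from (perm_ra k) (guess_loc {r}, u[r:=Some d]) w"
  shows False
proof -
  have lu: "length u = k" using sh by (simp add: filled_def)
  have v0: "stored u = {}" using stored_init[OF sh] .
  have dv: "d \<notin> stored u" using v0 by simp
  have un: "\<And>s. s < k \<Longrightarrow> u!s = None" using sh by (auto simp: filled_def)
  have sh0: "filled k {..<1} (u[0:=Some d])" using filled_update[OF sh _ _ dv, of 0] k by (auto simp: lessThan_Suc)
  have shr: "filled k {r} (u[r:=Some d])" using filled_update[OF sh r _ dv] by simp
  have vv0: "stored (u[0:=Some d]) = {d}" using stored_update[of 0 u d] k lu un v0 by simp
  have vvr: "stored (u[r:=Some d]) = {d}" using stored_update[of r u d] r lu un v0 by simp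
  have "\<not> store_completes k 1 (u[0:=Some d]) w"
    using accepts_from_store[OF k _ _ sh0, of w] a1 k by (simp add:)
  moreover have "guess_completes k {r} (u[r:=Some d]) w" using accepts_from_guess_completes[OF k _ shr a2] by simp
  then have "store_completes k 1 (u[0:=Some d]) w" unfolding guess_completes_def store_completes_def using vv0 vvr by auto
  ultimately show False by simp
qed

lemma step_from_check_unique:
  assumes u: "all_filled k u" and S: "S \<subseteq> {..<k}"
    and "step (perm_ra k) (check_loc S, u) a q1" "step (perm_ra k) (check_loc S, u) a q2"
  shows "q1 = q2"
proof -
  obtain c d where [simp]: "a = (c, d)" by (cases a)
  show ?thesis
  proof (cases "\<exists>r<k. r \<notin> S \<and> u ! r = Some d")
    case True
    then obtain r where "r < k" "r \<notin> S" "u ! r = Some d" by blast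
    then show ?thesis using assms(3,4) step_from_check_unchecked[OF u S] by (cases q1, cases q2) auto
  next
    case False
    then show ?thesis using assms(3,4) step_from_check_other[OF u S] by (cases q1, cases q2) auto
  qed
qed

lemma successor_unique_from_init:
  assumes k: "k \<ge> 1" and u: "filled k {} u"
    and steps: "step (perm_ra k) (store_loc 0, u) (c, d) (l1, v1)"
      "step (perm_ra k) (store_loc 0, u) (c, d) (l2, v2)"
    and acc: "accepts_from (perm_ra k) (l1, v1) w" "accepts_from (perm_ra k) (l2, v2) w"
  shows "(l1, v1) = (l2, v2)"
proof -
  have lu: "length u = k" and dv: "d \<notin> stored u" using u stored_init by (auto simp: filled_def)
  have succ: "(l = store_phase k (Suc 0) \<and> v = u[0 := Some d])
      \<or> (\<exists>r<k. l = guess_loc {r} \<and> v = u[r := Some d])"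
    if "step (perm_ra k) (store_loc 0, u) (c, d) (l, v)" for l v
    using that step_from_store[OF _ lu] k dv by auto
  note exclusive = store_guess_exclusive[OF k u]
  have unique: "r1 = r2" if "r1 < k" "r2 < k"
    "accepts_from (perm_ra k) (guess_loc {r1}, u[r1 := Some d]) w"
    "accepts_from (perm_ra k) (guess_loc {r2}, u[r2 := Some d]) w" for r1 r2
    using guess_choice_unique[OF k u dv, of r1 r2 w] that by simp
  from succ[OF steps(1)] succ[OF steps(2)] show ?thesis
    using acc by (elim disjE exE conjE) (auto dest: exclusive unique)
qed

lemma successor_unique_from_guess:
  assumes k: "k \<ge> 1" and S: "S \<noteq> {}" and u: "filled k S u"
    and steps: "step (perm_ra k) (guess_loc S, u) (c, d) (l1, v1)"
      "step (perm_ra k) (guess_loc S, u) (c, d) (l2, v2)"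
    and acc: "accepts_from (perm_ra k) (l1, v1) w" "accepts_from (perm_ra k) (l2, v2) w"
  shows "(l1, v1) = (l2, v2)"
proof -
  have lu: "length u = k" and S_sub: "S \<subseteq> {..<k}" using u by (auto simp: filled_def)
  note succ = steps[unfolded step_from_guess[OF S_sub S lu]]
  show ?thesis
  proof (cases "S = {..<k}")
    case True
    then show ?thesis using succ by auto
  next
    case False
    then obtain r1 r2 where "d \<notin> stored u" "r1 < k" "r1 \<notin> S" "r2 < k" "r2 \<notin> S"
      "l1 = guess_loc (insert r1 S)" "v1 = u[r1 := Some d]"
      "l2 = guess_loc (insert r2 S)" "v2 = u[r2 := Some d]"
      using succ by auto
    moreover from this have "r1 = r2" using guess_choice_unique[OF k u] acc by simp
    ultimately show ?thesis by simp
  qed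
qed

lemma reach_inv_successor_unique:
  assumes k: "k \<ge> 1" and "reach_inv k q"
    and "step (perm_ra k) q a q1" "step (perm_ra k) q a q2"
    and "accepts_from (perm_ra k) q1 w" "accepts_from (perm_ra k) q2 w"
  shows "q1 = q2"
proof -
  obtain c d l1 v1 l2 v2 where [simp]: "a = (c, d)" "q1 = (l1, v1)" "q2 = (l2, v2)"
    by (cases a, cases q1, cases q2) auto
  have steps: "step (perm_ra k) q (c, d) (l1, v1)" "step (perm_ra k) q (c, d) (l2, v2)"
    and acc: "accepts_from (perm_ra k) (l1, v1) w" "accepts_from (perm_ra k) (l2, v2) w"
    using assms(3-6) by simp_all
  show ?thesis
    using assms(2)
  proof cases
    case (store i u)
    then have "length u = k" by (simp add: filled_def)
    show ?thesis
    proof (cases "i = 0")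
      case True
      then show ?thesis using successor_unique_from_init[OF k _ _ _ acc] store steps by simp
    next
      case False
      then show ?thesis using steps store step_from_store[OF store(2) \<open>length u = k\<close>] by auto
    qed
  next
    case (guess S u)
    then show ?thesis using successor_unique_from_guess[OF k _ _ _ _ acc] steps by simp
  next
    case (verify j u)
    then have "length u = k" by (simp add: all_filled_def)
    then show ?thesis using steps verify step_from_verify by auto
  next
    case (check S u)
    from step_from_check_unique[OF check(3,2) steps[unfolded check(1)]] show ?thesis by simp
  next
    case (sink u)
    then show ?thesis using steps step_from_sink by auto
  qed
qed

lemma words_perm_ra: "w \<in> words (perm_ra k) \<longleftrightarrow> zero_letters w"
  by (simp add: words_def zero_letters_def)

lemma accepts_from_init:
  assumes k: "k \<ge> 1" and w: "zero_letters w"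
  shows "accepts_from (perm_ra k) (init_state (perm_ra k)) w"
proof (cases w)
  case Nil then show ?thesis using k by (simp add: init_state_perm_ra accepts_from_Nil)
next
  case (Cons a x)
  obtain c d where a: "a = (c,d)" by (cases a)
  have c: "c = 0" and wx: "zero_letters x" using w Cons a by auto
  let ?u0 = "replicate k None :: nat option list"
  let ?u1 = "?u0[0:=Some d]"
  have sh0: "filled k {} ?u0" by (rule filled_init)
  have v0: "stored ?u0 = {}" using stored_init[OF sh0] .
  have sh1: "filled k {..<1} ?u1" using filled_update[OF sh0 _ _, of 0 d] k v0 by (auto simp: lessThan_Suc)
  have vv1: "stored ?u1 = {d}" using stored_update[of 0 ?u0 d] k v0 by simp
  show ?thesis
  proof (cases "store_completes k 1 ?u1 x")
    case True
    then obtain ys b where h: "map snd x = ys @ b" "length ys = k - 1" "distinct ys"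
      "set ys \<inter> {d} = {}" "length b = k" "set b = {d} \<union> set ys" unfolding store_completes_def vv1 by blast
    have dys: "d \<notin> set ys" using h(4) by auto
    have "card (set b) = k" using h(3,2,6) dys k by (simp add: distinct_card)
    then have db: "distinct b" using h(5) by (simp add: card_distinct)
    have "guess_completes k {} ?u0 w" unfolding guess_completes_def
    proof (rule exI[of _ "d#ys"], rule exI[of _ b], intro conjI)
      show "map snd w = (d#ys) @ b" using Cons a h(1) by simp
      show "length (d#ys) = k - card {}" using h(2) k by simp
      show "distinct (d#ys)" using h(3) dys by simp
      show "set (d#ys) \<inter> stored ?u0 = {}" using v0 by simp
      show "length b = k" by (fact h(5))
      show "distinct b" by (fact db)
      show "set b = stored ?u0 \<union> set (d#ys)" using h(6) v0 by simp
    qed simp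
    then have "accepts_from (perm_ra k) (guess_from k {}, ?u0) w" using guess_completes_accepts[OF k sh0 w] by simp
    then show ?thesis by (simp add: init_state_perm_ra guess_from_def)
  next
    case False
    have "accepts_from (perm_ra k) (store_phase k 1, ?u1) x" using accepts_from_store[OF k _ k sh1] False wx by simp
    moreover have "step (perm_ra k) (store_loc 0, ?u0) (c,d) (store_phase k (Suc 0), ?u1)"
      using step_from_store[of 0 k ?u0 c d "store_phase k (Suc 0)" ?u1] k c v0 by simp
    ultimately show ?thesis using Cons a by (auto simp: init_state_perm_ra accepts_from_Cons)
  qed
qed

lemma reach_inv_accepts_some:
  assumes k: "k \<ge> 1" and "reach_inv k q"
  shows "\<exists>w. zero_letters w \<and> accepts_from (perm_ra k) q w"
  using assms(2)
proof cases
  case (guess S u)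
  then show ?thesis using guess_from_accepts_some[OF k, of S u] by (simp add: guess_from_def)
next
  case (verify j u)
  note u = all_filled_list[OF verify(4)]
  have "accepts_from (perm_ra k) (verify_from k j, map Some (map the u)) (map (Pair 0) (drop j (map the u)))"
    using accepts_from_verify[OF k u(4) verify(3)] by (simp add: zero_letters_def comp_def)
  then show ?thesis
    using u(1) verify by (intro exI[of _ "map (Pair 0) (drop j (map the u))"])
      (auto simp: zero_letters_def verify_from_def)
next
  case (check S u)
  show ?thesis
  proof (cases "S = {..<k}")
    case False
    then show ?thesis using check by (intro exI[of _ "[]"]) (simp add: accepts_from_Nil check_loc_in_perm_acc)
  next
    case True
    have "length u = k" using check by (simp add: all_filled_def)
    then have "step (perm_ra k) (check_loc S, u) (0, 0) (sink_loc, u)"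
      using step_from_check[OF check(2)] True by simp
    then show ?thesis using check by (intro exI[of _ "[(0, 0)]"]) (auto simp: accepts_from_Cons accepts_from_Nil)
  qed
qed (auto intro!: exI[of _ "[]"] simp: accepts_from_Nil)

lemma guess_from_in_perm_locs:
  "k \<ge> 1 \<Longrightarrow> S \<subseteq> {..<k} \<Longrightarrow> guess_from k S \<in> perm_locs k"
  using perm_locs_intros(1)[of 0 k] perm_locs_intros(2)[of S k] by (auto simp: guess_from_def)

lemma verify_from_in_perm_locs: "j < k \<Longrightarrow> verify_from k j \<in> perm_locs k"
  using perm_locs_intros(2)[of "{..<k}" k] perm_locs_intros(3)[of j k] by (auto simp: verify_from_def)

lemma perm_edges_in_perm_locs:
  assumes "k \<ge> 1" "(l, \<sigma>, \<phi>, l') \<in> perm_edges k"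
  shows "\<sigma> = 0 \<and> l \<in> perm_locs k \<and> l' \<in> perm_locs k"
  using assms(2) unfolding perm_edges_split
  by (elim disjE)
    (auto simp: edge_families_mem perm_locs_intros guess_from_in_perm_locs[OF assms(1)]
      verify_from_in_perm_locs intro!: perm_locs_intros(2,3,4))

definition keeps_or_loads :: "nat \<Rightarrow> constr \<Rightarrow> bool" where
  "keeps_or_loads k \<phi> \<longleftrightarrow>
     (\<forall>r<k. CEq (Nxt r) (Cur r) \<in> conjuncts \<phi> \<or> CEq (Nxt r) Dat \<in> conjuncts \<phi>)"

lemma keeps_or_loads_load [simp]:
  "keeps_or_loads k (load k s)" "keeps_or_loads k (CAnd X (load k s))"
  using conjuncts_load by (auto simp: keeps_or_loads_def)

lemma perm_edges_constraint:
  "(l, \<sigma>, \<phi>, l') \<in> perm_edges k \<Longrightarrow> cregs \<phi> \<subseteq> {..<k} \<and> keeps_or_loads k \<phi>"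
  unfolding perm_edges_split
  by (elim disjE)
    (auto simp: edge_families_mem dest: subsetD[OF cregs_load] subsetD[OF cregs_fresh_datum])

lemma finite_perm_edges: "finite (perm_edges k)"
proof -
  have "finite {(S, r). S \<subseteq> {..<k} \<and> r < k \<and> r \<notin> S}"
    "finite {(S, r). S \<subseteq> {..<k} \<and> S \<noteq> {..<k} \<and> r \<in> S}"
    by (rule finite_subset[of _ "Pow {..<k} \<times> {..<k}"]; auto)+
  moreover have "finite {S. S \<subseteq> {..<k} \<and> S \<noteq> {..<k}}"
    by (rule finite_subset[of _ "Pow {..<k}"]) auto
  ultimately show ?thesis
    unfolding perm_edges_def store_edges_def store_abort_edges_def guess_edges_def
      verify_edges_def check_edges_def check_repeat_edges_def check_fresh_edges_def sink_edges_def
    by simp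
qed

lemma wf_perm_ra:
  assumes "k \<ge> 1"
  shows "wf_ra (perm_ra k)"
proof -
  have "l \<in> perm_locs k \<and> \<sigma> \<in> {0} \<and> l' \<in> perm_locs k \<and> cregs \<phi> \<subseteq> {..<k} \<and> keeps_or_loads k \<phi>"
    if "(l, \<sigma>, \<phi>, l') \<in> perm_edges k" for l \<sigma> \<phi> l'
    using perm_edges_in_perm_locs[OF assms that] perm_edges_constraint[OF that] by simp
  moreover have "finite (perm_locs k)" "store_loc 0 \<in> perm_locs k" "perm_acc k \<subseteq> perm_locs k"
    using assms by (auto simp: perm_locs_def perm_acc_def)
  ultimately show ?thesis
    using finite_perm_edges unfolding wf_ra_def keeps_or_loads_def by fastforce
qed

section \<open>A configuration with k! states at one location\<close>

text \<open>Reading 0, ..., k-1 while storing datum v in the register r with xs ! r = v.\<close>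
definition perm_regs :: "nat \<Rightarrow> nat list \<Rightarrow> nat \<Rightarrow> nat set" where
  "perm_regs k xs i = {r. r < k \<and> xs!r < i}"
definition perm_val :: "nat list \<Rightarrow> nat \<Rightarrow> nat option list" where
  "perm_val xs i = map (\<lambda>v. if v < i then Some v else None) xs"

lemma permutation_facts:
  assumes "xs \<in> permutations_of_set {0..<k}"
  shows "distinct xs" "set xs = {0..<k}" "length xs = k"
proof -
  show d: "distinct xs" "set xs = {0..<k}" using permutations_of_setD[OF assms] by auto
  then show "length xs = k" using distinct_card[OF d(1)] by simp
qed

lemma filled_perm_val:
  assumes p: "xs \<in> permutations_of_set {0..<k}"
  shows "filled k (perm_regs k xs i) (perm_val xs i)"
proof -
  note pf = permutation_facts[OF p]
  have "inj_val (perm_val xs i)" unfolding inj_val_def perm_val_def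
  proof (intro allI impI)
    fix a b assume h: "a < length (map (\<lambda>v. if v < i then Some v else None) xs)"
      "b < length (map (\<lambda>v. if v < i then Some v else None) xs)" "a \<noteq> b"
      "map (\<lambda>v. if v < i then Some v else None) xs ! a \<noteq> None"
    have "xs!a \<noteq> xs!b" using pf(1) h by (simp add: nth_eq_iff_index_eq)
    then show "map (\<lambda>v. if v < i then Some v else None) xs ! a \<noteq> map (\<lambda>v. if v < i then Some v else None) xs ! b"
      using h by auto
  qed
  then show ?thesis using pf(3) by (auto simp: filled_def perm_regs_def perm_val_def)
qed

lemma stored_perm_val: "i' \<in> stored (perm_val xs i) \<Longrightarrow> i' < i"
  by (auto simp: stored_def perm_val_def split: if_splits)

lemma perm_val_reachable:
  assumes k: "k \<ge> 1" and p: "xs \<in> permutations_of_set {0..<k}"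
  shows "i \<le> k \<Longrightarrow> (guess_from k (perm_regs k xs i), perm_val xs i) \<in> succ_word (perm_ra k) {init_state (perm_ra k)} (map (Pair 0) [0..<i])"
proof (induction i)
  case 0
  note pf = permutation_facts[OF p]
  have "perm_regs k xs 0 = {}" by (simp add: perm_regs_def)
  moreover have "perm_val xs 0 = replicate k None" using pf(3) by (simp add: perm_val_def map_replicate_const)
  ultimately show ?case by (simp add: init_state_perm_ra guess_from_def)
next
  case (Suc i)
  note pf = permutation_facts[OF p]
  have ik: "i < k" using Suc.prems by simp
  have "i \<in> set xs" using pf(2) ik by simp
  then obtain r where r: "r < k" "xs!r = i" using pf(3) by (auto simp: in_set_conv_nth)
  have rS: "r \<notin> perm_regs k xs i" using r by (simp add: perm_regs_def)
  have iv: "i \<notin> stored (perm_val xs i)" using stored_perm_val by blast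
  have st: "step (perm_ra k) (guess_from k (perm_regs k xs i), perm_val xs i) (0,i) (guess_loc (insert r (perm_regs k xs i)), (perm_val xs i)[r:=Some i])"
    using step_guess_from[OF k filled_perm_val[OF p] r(1) rS iv] .
  have uniq: "r' < k \<Longrightarrow> xs!r' = i \<longleftrightarrow> r' = r" for r'
    using pf r by (auto simp: nth_eq_iff_index_eq)
  have S': "perm_regs k xs (Suc i) = insert r (perm_regs k xs i)"
  proof (rule set_eqI)
    fix x show "x \<in> perm_regs k xs (Suc i) \<longleftrightarrow> x \<in> insert r (perm_regs k xs i)"
      using uniq[of x] r by (auto simp: perm_regs_def less_Suc_eq)
  qed
  have U': "perm_val xs (Suc i) = (perm_val xs i)[r:=Some i]"
  proof (rule nth_equalityI)
    show "length (perm_val xs (Suc i)) = length ((perm_val xs i)[r := Some i])" by (simp add: perm_val_def)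
    fix j assume "j < length (perm_val xs (Suc i))"
    then have j: "j < k" using pf(3) by (simp add: perm_val_def)
    show "perm_val xs (Suc i) ! j = (perm_val xs i)[r := Some i] ! j"
    proof (cases "j = r")
      case True then show ?thesis using r pf(3) by (simp add: perm_val_def)
    next
      case False
      then have "xs!j \<noteq> i" using uniq j by blast
      then show ?thesis using False j pf(3) by (auto simp: perm_val_def nth_list_update)
    qed
  qed
  have "guess_from k (perm_regs k xs (Suc i)) = guess_loc (insert r (perm_regs k xs i))" using S' by (simp add: guess_from_def)
  then have "(guess_from k (perm_regs k xs (Suc i)), perm_val xs (Suc i)) \<in> succ (perm_ra k) (succ_word (perm_ra k) {init_state (perm_ra k)} (map (Pair 0) [0..<i])) (0,i)"
    using st Suc.IH Suc.prems U' unfolding succ_def by auto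
  then show ?case by (simp add: succ_word_snoc)
qed

lemma perm_in_config:
  assumes k: "k \<ge> 1" and p: "xs \<in> permutations_of_set {0..<k}"
  shows "(guess_loc {..<k}, map Some xs) \<in> succ_word (perm_ra k) {init_state (perm_ra k)} (map (Pair 0) [0..<k])"
proof -
  note pf = permutation_facts[OF p]
  have "perm_regs k xs k = {..<k}" using pf by (auto simp: perm_regs_def)
  moreover have "perm_val xs k = map Some xs"
  proof -
    have "\<forall>v\<in>set xs. v < k" using pf by auto
    then show ?thesis by (auto simp: perm_val_def)
  qed
  moreover have "guess_from k {..<k} = guess_loc {..<k}" using k by (auto simp: guess_from_def lessThan_empty_iff)
  moreover have "(guess_from k (perm_regs k xs k), perm_val xs k) \<in> succ_word (perm_ra k) {init_state (perm_ra k)} (map (Pair 0) [0..<k])"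
    using perm_val_reachable[OF k p, of k] by simp
  ultimately show ?thesis by (simp only:)
qed

lemma perm_config_card:
  assumes k: "k \<ge> 1"
  shows "ecard {q \<in> succ_word (perm_ra k) {init_state (perm_ra k)} (map (Pair 0) [0..<k]). fst q = guess_loc {..<k}} \<ge> enat (fact k)"
proof -
  let ?C = "{q \<in> succ_word (perm_ra k) {init_state (perm_ra k)} (map (Pair 0) [0..<k]). fst q = guess_loc {..<k}}"
  let ?f = "\<lambda>xs. (guess_loc {..<k}, map Some xs)"
  have sub: "?f ` permutations_of_set {0..<k} \<subseteq> ?C" using perm_in_config[OF k] by auto
  have inj: "inj_on ?f (permutations_of_set {0..<k})" by (auto simp: inj_on_def)
  have cp: "card (?f ` permutations_of_set {0..<k}) = fact k"
    using card_image[OF inj] by simp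
  show ?thesis
  proof (cases "finite ?C")
    case True
    have "card (?f ` permutations_of_set {0..<k}) \<le> card ?C" using card_mono[OF True sub] .
    then show ?thesis using True cp by (simp add: ecard_def)
  next
    case False then show ?thesis by (simp add: ecard_def)
  qed
qed

lemma k_URA_perm_ra:
  assumes "k \<ge> 1"
  shows "k_URA k (perm_ra k)"
proof -
  have "unambiguous (perm_ra k)"
    by (rule unambiguousI[where I = "reach_inv k"])
      (use reach_inv_init reach_inv_step reach_inv_successor_unique assms in blast)+
  then show ?thesis unfolding k_URA_def k_RA_def using wf_perm_ra[OF assms] by simp
qed

lemma reachable_state_perm_ra_reach_inv:
  "k \<ge> 1 \<Longrightarrow> reachable_state (perm_ra k) q \<Longrightarrow> reach_inv k q"
  by (rule reachable_state_induct[where I = "reach_inv k"]) (use reach_inv_init reach_inv_step in blast)+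

lemma clean_perm_ra:
  assumes "k \<ge> 1"
  shows "clean (perm_ra k)"
  unfolding clean_def
proof (intro allI impI)
  fix q assume "reachable_state (perm_ra k) q"
  then have inv: "reach_inv k q" using assms by (rule reachable_state_perm_ra_reach_inv[rotated])
  have "\<exists>w\<in>words (perm_ra k). accepts_from (perm_ra k) q w"
    using reach_inv_accepts_some[OF assms inv] by (auto simp: words_perm_ra)
  moreover have "snd q ! i \<noteq> snd q ! j" if "i < length (snd q)" "j < length (snd q)" "i \<noteq> j" "snd q ! i \<noteq> None"
    for i j
    using reach_inv_inj_val[OF inv] that unfolding inj_val_def by blast
  ultimately show "(\<exists>w\<in>words (perm_ra k). accepts_from (perm_ra k) q w) \<and>
      (\<forall>i<length (snd q). \<forall>j<length (snd q). \<forall>n.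
        i \<noteq> j \<longrightarrow> snd q ! i = Some n \<longrightarrow> snd q ! j \<noteq> Some n)"
    by fastforce
qed

lemma universal_perm_ra: "k \<ge> 1 \<Longrightarrow> universal (perm_ra k)"
  using accepts_from_init by (auto simp: universal_def lang_def words_perm_ra)

theorem lemma2:
  fixes k :: nat
  assumes "k \<ge> 1"
  shows "(\<exists>(A :: (nat, nat) ra) C l.
            k_URA k A \<and> clean A \<and> universal A \<and> (\<exists>\<sigma>. alph A = {\<sigma>})
            \<and> reachable_config A C \<and> ecard {q \<in> C. fst q = l} \<ge> enat (fact k))
         \<and> N k \<ge> enat (fact k)"
proof -
  let ?C = "succ_word (perm_ra k) {init_state (perm_ra k)} (map (Pair 0) [0..<k])"
  have config: "reachable_config (perm_ra k) ?C"
    unfolding reachable_config_def by (auto simp: words_perm_ra zero_letters_def)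
  have A: "k_URA k (perm_ra k)" "clean (perm_ra k)" "universal (perm_ra k)"
    using assms by (simp_all add: k_URA_perm_ra clean_perm_ra universal_perm_ra)
  have "ecard {q \<in> ?C. fst q = guess_loc {..<k}} \<ge> enat (fact k)"
    using perm_config_card[OF assms] .
  moreover have "ecard {q \<in> ?C. fst q = guess_loc {..<k}} \<le> N k"
    using ecard_le_N[OF A config] .
  ultimately show ?thesis
    using A config by (intro conjI exI[of _ "perm_ra k"] exI[of _ ?C]) (auto intro: order_trans)
qed

end
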